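(* Let $\alpha$ be a composition of a non-negative integer $n$. Then \[\zeta_-(F_\alpha)=\frac{(-1)^{p_-(\alpha)}}{2^{2\lfloor n/2\rfloor}}\,C\bigl(p_-(\alpha),\lfloor n/2\rfloor-p_-(\alpha)\bigr),\] \[\zeta_+(F_\alpha)=\begin{cases}\dfrac{(-1)^{p_+(\alpha)}}{2^n}\,C\bigl(p_+(\alpha),n/2-p_+(\alpha)\bigr)&\text{if } n\text{ is even},\\ 0&\text{if } n\text{ is odd.}\end{cases}\]
   Context: $\Bbbk$ is a field of characteristic $\neq 2$. A composition $\alpha=(a_1,\ldots,a_k)$ of $n\ge0$ is a sequence of positive integers with sum $n$; $k(\alpha)=k$; $()$ is the empty composition. For compositions $\alpha,\beta$ of $n$, $\beta\ge\alpha$ means $\beta$ refines $\alpha$ ($\beta$ is obtained from $\alpha$ by splitting parts). Statistics: $p_-(\alpha)=\#\{i\ne k: a_i>1\}$; $p_+(\alpha)=1+\#\{i\ne 1,k: a_i>1\}$ if $k>1$, and $p_+(\alpha)=0$ if $k\le 1$. ${\mathcal{Q}Sym}$ is the Hopf algebra of quasi-symmetric functions over $\Bbbk$, graded and connected, with monomial basis $M_\alpha=\sum_{i_1<\cdots<i_k}x_{i_1}^{a_1}\cdots x_{i_k}^{a_k}$ ($M_{()}=1$), fundamental basis $F_\alpha=\sum_{\beta\ge\alpha}M_\beta$, ordinary product, coproduct $\Delta(M_\alpha)=\sum_{i=0}^kM_{(a_1,\ldots,a_i)}\otimes M_{(a_{i+1},\ldots,a_k)}$, counit $\epsilon(M_\alpha)=\delta_{\alpha,()}$.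 Convolution of functionals: $\rho\psi=m\circ(\rho\otimes\psi)\circ\Delta$. Characters (algebra morphisms ${\mathcal{Q}Sym}\to\Bbbk$) form a group under convolution. For a functional $\varphi$, $\bar\varphi(h)=(-1)^n\varphi(h)$ for $h$ homogeneous of degree $n$; $\varphi$ is even if $\bar\varphi=\varphi$ and odd if $\bar\varphi=\varphi^{-1}$. Every character factors uniquely as $\varphi=\varphi_+\varphi_-$ with $\varphi_+$ even and $\varphi_-$ odd characters. The universal character is $\zeta(f)=f(1,0,0,\ldots)$, so $\zeta(M_\alpha)=\zeta(F_\alpha)=1$ if $\alpha=()$ or $\alpha=(n)$ and $0$ otherwise; $\zeta_\pm$ are its even and odd parts. $C(m,n)=\frac{(2m)!(2n)!}{m!(m+n)!n!}$. *)

theory Defs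
  imports Main "HOL-Library.Multiset"
begin

definition is_comp :: "nat list \<Rightarrow> bool" where
  "is_comp \<alpha> \<longleftrightarrow> (\<forall>a\<in>set \<alpha>. 0 < a)"

definition is_comp_of :: "nat list \<Rightarrow> nat \<Rightarrow> bool" where
  "is_comp_of \<alpha> n \<longleftrightarrow> is_comp \<alpha> \<and> sum_list \<alpha> = n"

definition refinements :: "nat list \<Rightarrow> nat list set" where
  "refinements \<alpha> = {\<beta>. \<exists>\<beta>s. length \<beta>s = length \<alpha>
       \<and> (\<forall>i<length \<alpha>. is_comp_of (\<beta>s ! i) (\<alpha> ! i)) \<and> \<beta> = concat \<beta>s}"

text \<open>Statistics p_- and p_+ (parts indexed from 0 here, k = length).\<close>
definition p_minus :: "nat list \<Rightarrow> nat" where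
  "p_minus \<alpha> = card {i. i + 1 < length \<alpha> \<and> 1 < \<alpha> ! i}"

definition p_plus :: "nat list \<Rightarrow> nat" where
  "p_plus \<alpha> = (if 1 < length \<alpha>
      then 1 + card {i. 0 < i \<and> i + 1 < length \<alpha> \<and> 1 < \<alpha> ! i} else 0)"

text \<open>C(m,n) = (2m)!(2n)!/(m!(m+n)!n!), an integer (super Catalan number).\<close>
definition superC :: "nat \<Rightarrow> nat \<Rightarrow> nat" where
  "superC m n = (fact (2*m) * fact (2*n)) div (fact m * fact (m+n) * fact n)"

text \<open>Product in the monomial basis: M_alpha M_beta = sum over the quasi-shuffles gamma of
  alpha and beta (with multiplicity) of M_gamma.\<close>
fun qsh :: "nat list \<Rightarrow> nat list \<Rightarrow> nat list multiset" where
  "qsh [] ys = {#ys#}"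
| "qsh xs [] = {#xs#}"
| "qsh (a # xs) (b # ys) =
     image_mset ((#) a) (qsh xs (b # ys)) + image_mset ((#) b) (qsh (a # xs) ys)
     + image_mset ((#) (a + b)) (qsh xs ys)"

text \<open>A linear functional on QSym is represented by its values on the monomial basis
  (phi alpha = phi(M_alpha)); values at non-compositions are normalised to 0.\<close>
definition is_functional :: "(nat list \<Rightarrow> 'k::field) \<Rightarrow> bool" where
  "is_functional \<phi> \<longleftrightarrow> (\<forall>\<alpha>. \<not> is_comp \<alpha> \<longrightarrow> \<phi> \<alpha> = 0)"

definition is_char :: "(nat list \<Rightarrow> 'k::field) \<Rightarrow> bool" where
  "is_char \<phi> \<longleftrightarrow> \<phi> [] = 1 \<and>
     (\<forall>\<alpha> \<beta>. is_comp \<alpha> \<longrightarrow> is_comp \<beta> \<longrightarrow> \<phi> \<alpha> * \<phi> \<beta> = (\<Sum>\<gamma>\<in>#qsh \<alpha> \<beta>. \<phi> \<gamma>))"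

text \<open>Convolution via the deconcatenation coproduct, and the counit.\<close>
definition conv :: "(nat list \<Rightarrow> 'k::field) \<Rightarrow> (nat list \<Rightarrow> 'k) \<Rightarrow> nat list \<Rightarrow> 'k" where
  "conv \<rho> \<psi> \<alpha> = (\<Sum>i\<le>length \<alpha>. \<rho> (take i \<alpha>) * \<psi> (drop i \<alpha>))"

definition counit :: "nat list \<Rightarrow> 'k::field" where
  "counit \<alpha> = (if \<alpha> = [] then 1 else 0)"

definition bar :: "(nat list \<Rightarrow> 'k::field) \<Rightarrow> nat list \<Rightarrow> 'k" where
  "bar \<phi> \<alpha> = (-1) ^ sum_list \<alpha> * \<phi> \<alpha>"

definition is_even :: "(nat list \<Rightarrow> 'k::field) \<Rightarrow> bool" where
  "is_even \<phi> \<longleftrightarrow> (\<forall>\<alpha>. is_comp \<alpha> \<longrightarrow> bar \<phi> \<alpha> = \<phi> \<alpha>)"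

definition is_odd :: "(nat list \<Rightarrow> 'k::field) \<Rightarrow> bool" where
  "is_odd \<phi> \<longleftrightarrow> (\<forall>\<alpha>. is_comp \<alpha> \<longrightarrow>
      conv \<phi> (bar \<phi>) \<alpha> = counit \<alpha> \<and> conv (bar \<phi>) \<phi> \<alpha> = counit \<alpha>)"

definition zeta :: "nat list \<Rightarrow> 'k::field" where
  "zeta \<alpha> = (if is_comp \<alpha> \<and> length \<alpha> \<le> 1 then 1 else 0)"

text \<open>The even-odd factorisation phi = phi_+ phi_- (unique among normalised functionals).\<close>
definition even_odd_factors :: "(nat list \<Rightarrow> 'k::field) \<Rightarrow> (nat list \<Rightarrow> 'k) \<Rightarrow> (nat list \<Rightarrow> 'k) \<Rightarrow> bool" where
  "even_odd_factors \<phi> p m \<longleftrightarrow> is_functional p \<and> is_functional m \<and>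
     is_char p \<and> is_char m \<and> is_even p \<and> is_odd m \<and>
     (\<forall>\<alpha>. is_comp \<alpha> \<longrightarrow> \<phi> \<alpha> = conv p m \<alpha>)"

definition even_part :: "(nat list \<Rightarrow> 'k::field) \<Rightarrow> nat list \<Rightarrow> 'k" where
  "even_part \<phi> = fst (THE pm. even_odd_factors \<phi> (fst pm) (snd pm))"

definition odd_part :: "(nat list \<Rightarrow> 'k::field) \<Rightarrow> nat list \<Rightarrow> 'k" where
  "odd_part \<phi> = snd (THE pm. even_odd_factors \<phi> (fst pm) (snd pm))"

text \<open>Value of a functional on the fundamental basis element F_alpha.\<close>
definition onF :: "(nat list \<Rightarrow> 'k::field) \<Rightarrow> nat list \<Rightarrow> 'k" where
  "onF \<phi> \<alpha> = (\<Sum>\<beta>\<in>refinements \<alpha>. \<phi> \<beta>)"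

end

theory Submission
  imports Defs "HOL-Computational_Algebra.Formal_Power_Series" "HOL-Computational_Algebra.Polynomial"
begin

text \<open>
  In the group of characters under convolution, the odd factor of \<open>\<phi>\<close> is the unique square
  root of \<open>(bar \<phi>)\<^bsup>-1\<^esup> \<phi>\<close> taking the value 1 at the empty composition, and the even factor is
  \<open>(bar \<phi>) \<phi>\<^sub>-\<close>. For \<open>\<phi> = \<zeta>\<close> the square \<open>(bar \<zeta>)\<^bsup>-1\<^esup> \<zeta>\<close> is \<open>\<plusminus>2\<close> on compositions with odd last
  part, and its square root is \<open>\<zeta>\<^sub>-(M\<^sub>\<beta>) = (-1)\<^sup>e c\<^sub>o\<close> on those, where \<open>e\<close> and \<open>o\<close> count the
  even and odd parts of \<open>\<beta>\<close> and \<open>c\<^sub>j = binom(2k, k) / 4\<^sup>k\<close> with \<open>k = j div 2\<close>; checking the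
  square amounts to the identity \<open>\<Sum>\<^sub>i binom(2i, i) binom(2m - 2i, m - i) = 4\<^sup>m\<close>.

  Writing \<open>\<zeta>\<^sub>-(M\<^sub>\<beta>) = L((-1)\<^sup>e x\<^sup>o)\<close> for the linear functional \<open>L(x\<^sup>j) = c\<^sub>j\<close>, the sum over all
  refinements of \<open>\<alpha>\<close> factorises into one polynomial per part of \<open>\<alpha>\<close>, and equals
  \<open>L(x\<^bsup>n - 2p\<^esup> (x\<^sup>2 - 1)\<^sup>p)\<close> with \<open>p = p\<^sub>-(\<alpha>)\<close>. The recursion \<open>C(p+1, r) + C(p, r+1) = 4 C(p, r)\<close>
  evaluates this to the super Catalan number. The even part \<open>\<zeta>\<^sub>+ = (bar \<zeta>) \<zeta>\<^sub>-\<close> is treated in the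
  same way, its first part contributing the factor \<open>(x - 1) x\<^bsup>a - 1\<^esup>\<close> instead.
\<close>

section \<open>Convolution of functionals\<close>

lemma conv_Nil [simp]: "conv f g [] = f [] * g []"
  by (simp add: conv_def)

lemma conv_Cons: "conv f g (a # xs) = f [] * g (a # xs) + conv (\<lambda>u. f (a # u)) g xs"
  unfolding conv_def by (simp add: sum.atMost_Suc_shift del: sum.atMost_Suc)

lemma conv_split_last: "conv f g xs = (\<Sum>i<length xs. f (take i xs) * g (drop i xs)) + f xs * g []"
  unfolding conv_def by (simp add: lessThan_Suc_atMost[symmetric])

lemma conv_split_ends:
  assumes "xs \<noteq> []"
  shows "conv f g xs =
    f [] * g xs + (\<Sum>i\<in>{1..<length xs}. f (take i xs) * g (drop i xs)) + f xs * g []"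
proof -
  have "{..length xs} = insert 0 (insert (length xs) {1..<length xs})"
    using assms by auto
  then show ?thesis
    unfolding conv_def using assms by (simp add: algebra_simps)
qed

lemma conv_assoc: "conv (conv f g) h = conv f (conv g h)"
proof
  fix xs show "conv (conv f g) h xs = conv f (conv g h) xs"
  proof (induction xs arbitrary: f)
    case Nil
    then show ?case by simp
  next
    case (Cons a xs)
    have "conv (conv f g) h (a # xs) =
        f [] * g [] * h (a # xs) + conv (\<lambda>u. f [] * g (a # u) + conv (\<lambda>v. f (a # v)) g u) h xs"
      by (simp add: conv_Cons)
    also have "\<dots> = f [] * g [] * h (a # xs) + f [] * conv (\<lambda>u. g (a # u)) h xs
        + conv (conv (\<lambda>v. f (a # v)) g) h xs"
      unfolding conv_def by (simp add: algebra_simps sum.distrib sum_distrib_left)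
    finally show ?case
      by (simp add: Cons.IH conv_Cons algebra_simps)
  qed
qed

lemma counit_simps [simp]: "counit [] = 1" "counit (a # xs) = 0"
  by (simp_all add: counit_def)

lemma conv_counit_left [simp]: "conv counit f = f"
proof
  fix xs show "conv counit f xs = f xs"
  proof (cases xs)
    case (Cons a ys)
    have "conv (\<lambda>u. counit (a # u)) f ys = 0"
      by (simp add: conv_def)
    then show ?thesis using Cons by (simp add: conv_Cons)
  qed simp
qed

lemma conv_counit_right [simp]: "conv f counit = f"
proof
  fix xs show "conv f counit xs = f xs"
    by (induction xs arbitrary: f) (simp_all add: conv_Cons)
qed

lemma bar_conv: "bar (conv f g) = conv (bar f) (bar g)"
proof
  fix xs :: "nat list"
  have "sum_list (take i xs) + sum_list (drop i xs) = sum_list xs" for i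
    by (metis append_take_drop_id sum_list_append)
  then show "bar (conv f g) xs = conv (bar f) (bar g) xs"
    unfolding bar_def conv_def by (simp add: sum_distrib_left algebra_simps power_add[symmetric])
qed

lemma bar_bar [simp]: "bar (bar f) = f"
  by (rule ext) (simp add: bar_def power_add[symmetric] mult_2[symmetric] power_mult)

lemma bar_counit [simp]: "bar counit = counit"
  by (rule ext) (simp add: bar_def counit_def)

lemma bar_Nil [simp]: "bar f [] = f []"
  by (simp add: bar_def)

fun conv_inv :: "(nat list \<Rightarrow> 'k::field) \<Rightarrow> nat list \<Rightarrow> 'k" where
  "conv_inv \<phi> [] = 1"
| "conv_inv \<phi> (a # xs) =
    - (\<Sum>i<length (a # xs). conv_inv \<phi> (take i (a # xs)) * \<phi> (drop i (a # xs)))"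

declare conv_inv.simps(2) [simp del]

lemma conv_inv_left: "\<phi> [] = 1 \<Longrightarrow> conv (conv_inv \<phi>) \<phi> = counit"
proof
  fix xs assume "\<phi> [] = 1"
  then show "conv (conv_inv \<phi>) \<phi> xs = counit xs"
    by (cases xs) (simp_all only: conv_split_last[of _ _ "_ # _"] conv_inv.simps, simp_all)
qed

lemma conv_inv_right:
  assumes "\<phi> [] = 1"
  shows "conv \<phi> (conv_inv \<phi>) = counit"
proof -
  let ?\<psi> = "conv_inv \<phi>"
  have inv_inv: "conv (conv_inv ?\<psi>) ?\<psi> = counit"
    by (rule conv_inv_left) simp
  have "\<phi> = conv (conv (conv_inv ?\<psi>) ?\<psi>) \<phi>"
    by (simp add: inv_inv)
  also have "\<dots> = conv_inv ?\<psi>"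
    by (simp add: conv_assoc conv_inv_left[of \<phi>, OF assms])
  finally show ?thesis
    using inv_inv by simp
qed

lemma conv_right_cancel:
  assumes "\<phi> [] = 1" and "conv X \<phi> = conv Y \<phi>"
  shows "X = Y"
  by (metis assms conv_assoc conv_counit_right conv_inv_right)

fun conv_sqrt :: "(nat list \<Rightarrow> 'k::field) \<Rightarrow> nat list \<Rightarrow> 'k" where
  "conv_sqrt \<chi> [] = 1"
| "conv_sqrt \<chi> (a # xs) = (\<chi> (a # xs)
    - (\<Sum>i\<in>{1..<length (a # xs)}. conv_sqrt \<chi> (take i (a # xs)) * conv_sqrt \<chi> (drop i (a # xs)))) / 2"

declare conv_sqrt.simps(2) [simp del]

lemma conv_sqrt_square:
  assumes "\<chi> [] = 1" and "(2::'k::field) \<noteq> 0"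
  shows "conv (conv_sqrt \<chi>) (conv_sqrt \<chi>) = (\<chi> :: nat list \<Rightarrow> 'k)"
proof
  fix xs show "conv (conv_sqrt \<chi>) (conv_sqrt \<chi>) xs = \<chi> xs"
  proof (cases xs)
    case Nil
    then show ?thesis using assms by simp
  next
    case (Cons a ys)
    let ?S = "\<Sum>i\<in>{1..<length xs}. conv_sqrt \<chi> (take i xs) * conv_sqrt \<chi> (drop i xs)"
    have "conv (conv_sqrt \<chi>) (conv_sqrt \<chi>) xs = 2 * conv_sqrt \<chi> xs + ?S"
      using Cons by (simp add: conv_split_ends)
    also have "2 * conv_sqrt \<chi> xs = \<chi> xs - ?S"
      using Cons assms(2) by (simp add: conv_sqrt.simps(2))
    finally show ?thesis by simp
  qed
qed

lemma conv_square_inj: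
  assumes "X [] = 1" "Y [] = 1" "(2::'k::field) \<noteq> 0" and "conv X X = conv Y Y"
  shows "X = (Y :: nat list \<Rightarrow> 'k)"
proof
  fix xs show "X xs = Y xs"
  proof (induction "length xs" arbitrary: xs rule: less_induct)
    case less
    show ?case
    proof (cases "xs = []")
      case True
      then show ?thesis using assms by simp
    next
      case False
      have "(\<Sum>i\<in>{1..<length xs}. X (take i xs) * X (drop i xs)) =
            (\<Sum>i\<in>{1..<length xs}. Y (take i xs) * Y (drop i xs))"
      proof (rule sum.cong)
        fix i assume "i \<in> {1..<length xs}"
        then have "X (take i xs) = Y (take i xs)" "X (drop i xs) = Y (drop i xs)"
          by (auto intro!: less)
        then show "X (take i xs) * X (drop i xs) = Y (take i xs) * Y (drop i xs)"
          by simp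
      qed simp
      then have "2 * X xs = 2 * Y xs"
        using fun_cong[OF assms(4), of xs] assms(1,2)
        by (simp add: conv_split_ends[OF False] algebra_simps)
      then show ?thesis using assms(3) by simp
    qed
  qed
qed

section \<open>Characters\<close>

lemma is_comp_Nil [simp]: "is_comp []"
  by (simp add: is_comp_def)

lemma is_comp_Cons [simp]: "is_comp (a # xs) \<longleftrightarrow> 0 < a \<and> is_comp xs"
  by (simp add: is_comp_def)

lemma is_comp_append [simp]: "is_comp (xs @ ys) \<longleftrightarrow> is_comp xs \<and> is_comp ys"
  by (auto simp add: is_comp_def)

lemma is_comp_take: "is_comp xs \<Longrightarrow> is_comp (take i xs)"
  by (auto simp: is_comp_def dest: in_set_takeD)

lemma is_comp_drop: "is_comp xs \<Longrightarrow> is_comp (drop i xs)"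
  by (auto simp: is_comp_def dest: in_set_dropD)

lemma qsh_Nil2 [simp]: "qsh xs [] = {#xs#}"
  by (cases xs) simp_all

lemma length_le_qsh: "\<gamma> \<in># qsh xs ys \<Longrightarrow> length xs \<le> length \<gamma> \<and> length ys \<le> length \<gamma>"
  by (induction xs ys arbitrary: \<gamma> rule: qsh.induct) fastforce+

lemma sum_list_qsh: "\<gamma> \<in># qsh xs ys \<Longrightarrow> sum_list \<gamma> = sum_list xs + sum_list ys"
  by (induction xs ys arbitrary: \<gamma> rule: qsh.induct) fastforce+

text \<open>\<open>on_prod \<phi> xs ys\<close> is the value of \<open>\<phi>\<close> on the product \<open>M\<^sub>x\<^sub>s M\<^sub>y\<^sub>s\<close>.\<close>

definition on_prod :: "(nat list \<Rightarrow> 'k::field) \<Rightarrow> nat list \<Rightarrow> nat list \<Rightarrow> 'k" where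
  "on_prod f xs ys = (\<Sum>\<gamma>\<in>#qsh xs ys. f \<gamma>)"

lemma on_prod_Nil1 [simp]: "on_prod f [] ys = f ys"
  by (simp add: on_prod_def)

lemma on_prod_Nil2 [simp]: "on_prod f xs [] = f xs"
  by (simp add: on_prod_def)

lemma on_prod_Cons_Cons: "on_prod f (a # xs) (b # ys) =
    on_prod (\<lambda>u. f (a # u)) xs (b # ys) + on_prod (\<lambda>u. f (b # u)) (a # xs) ys
  + on_prod (\<lambda>u. f ((a + b) # u)) xs ys"
  by (simp add: on_prod_def image_mset.compositionality comp_def)

lemma on_prod_add: "on_prod (\<lambda>u. F u + G u) xs ys = on_prod F xs ys + on_prod G xs ys"
  by (simp add: on_prod_def sum_mset.distrib)

lemma on_prod_scale: "on_prod (\<lambda>u. c * F u) xs ys = c * on_prod F xs ys"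
  by (simp add: on_prod_def sum_mset_distrib_left)

lemma is_char_on_prod:
  "is_char \<phi> \<longleftrightarrow> \<phi> [] = 1 \<and> (\<forall>\<alpha> \<beta>. is_comp \<alpha> \<longrightarrow> is_comp \<beta> \<longrightarrow> \<phi> \<alpha> * \<phi> \<beta> = on_prod \<phi> \<alpha> \<beta>)"
  by (simp add: is_char_def on_prod_def)

text \<open>Convolution of functionals on \<open>QSym \<otimes> QSym\<close>, with the coproduct of the tensor square.\<close>

definition conv_pair :: "(nat list \<Rightarrow> nat list \<Rightarrow> 'k::field) \<Rightarrow> (nat list \<Rightarrow> nat list \<Rightarrow> 'k)
    \<Rightarrow> nat list \<Rightarrow> nat list \<Rightarrow> 'k" where
  "conv_pair F G xs ys = (\<Sum>i\<le>length xs. \<Sum>j\<le>length ys.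
      F (take i xs) (take j ys) * G (drop i xs) (drop j ys))"

lemma conv_pair_Cons_Cons: "conv_pair F G (a # xs) (b # ys) = F [] [] * G (a # xs) (b # ys)
  + (\<Sum>j\<le>length ys. F [] (b # take j ys) * G (a # xs) (drop j ys))
  + (\<Sum>i\<le>length xs. F (a # take i xs) [] * G (drop i xs) (b # ys))
  + (\<Sum>i\<le>length xs. \<Sum>j\<le>length ys. F (a # take i xs) (b # take j ys) * G (drop i xs) (drop j ys))"
  unfolding conv_pair_def by (simp add: sum.atMost_Suc_shift sum.distrib del: sum.atMost_Suc)

lemma conv_pair_Cons2: "conv_pair F G xs (b # ys) =
    (\<Sum>i\<le>length xs. F (take i xs) [] * G (drop i xs) (b # ys))
  + (\<Sum>i\<le>length xs. \<Sum>j\<le>length ys. F (take i xs) (b # take j ys) * G (drop i xs) (drop j ys))"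
  unfolding conv_pair_def by (simp add: sum.atMost_Suc_shift sum.distrib del: sum.atMost_Suc)

lemma conv_pair_Cons1: "conv_pair F G (a # xs) ys =
    (\<Sum>j\<le>length ys. F [] (take j ys) * G (a # xs) (drop j ys))
  + (\<Sum>i\<le>length xs. \<Sum>j\<le>length ys. F (a # take i xs) (take j ys) * G (drop i xs) (drop j ys))"
  unfolding conv_pair_def by (simp add: sum.atMost_Suc_shift sum.distrib del: sum.atMost_Suc)

text \<open>The coproduct is an algebra morphism.\<close>

lemma on_prod_conv: "on_prod (conv f g) xs ys = conv_pair (on_prod f) (on_prod g) xs ys"
proof (induction xs ys arbitrary: f rule: qsh.induct)
  case (1 ys)
  then show ?case by (simp add: conv_pair_def conv_def)
next
  case (2 a xs)
  then show ?case by (simp add: conv_pair_def conv_def)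
next
  case (3 a xs b ys)
  have conv_Cons_fun: "(\<lambda>u. conv f g (c # u)) = (\<lambda>u. f [] * g (c # u) + conv (\<lambda>v. f (c # v)) g u)"
    for c by (simp add: conv_Cons)
  have "on_prod (conv f g) (a # xs) (b # ys) = f [] * on_prod g (a # xs) (b # ys)
     + on_prod (conv (\<lambda>v. f (a # v)) g) xs (b # ys) + on_prod (conv (\<lambda>v. f (b # v)) g) (a # xs) ys
     + on_prod (conv (\<lambda>v. f ((a + b) # v)) g) xs ys"
    by (simp only: on_prod_Cons_Cons[of "conv f g"] conv_Cons_fun on_prod_add on_prod_scale
        on_prod_Cons_Cons[of g]) (simp add: algebra_simps)
  also have "\<dots> = f [] * on_prod g (a # xs) (b # ys)
     + conv_pair (on_prod (\<lambda>v. f (a # v))) (on_prod g) xs (b # ys)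
     + conv_pair (on_prod (\<lambda>v. f (b # v))) (on_prod g) (a # xs) ys
     + conv_pair (on_prod (\<lambda>v. f ((a + b) # v))) (on_prod g) xs ys"
    by (simp only: "3.IH")
  also have "conv_pair (on_prod (\<lambda>v. f (a # v))) (on_prod g) xs (b # ys) =
    (\<Sum>i\<le>length xs. f (a # take i xs) * on_prod g (drop i xs) (b # ys))
  + (\<Sum>i\<le>length xs. \<Sum>j\<le>length ys.
      on_prod (\<lambda>v. f (a # v)) (take i xs) (b # take j ys) * on_prod g (drop i xs) (drop j ys))"
    by (simp only: conv_pair_Cons2) simp
  also have "conv_pair (on_prod (\<lambda>v. f (b # v))) (on_prod g) (a # xs) ys =
    (\<Sum>j\<le>length ys. f (b # take j ys) * on_prod g (a # xs) (drop j ys))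
  + (\<Sum>i\<le>length xs. \<Sum>j\<le>length ys.
      on_prod (\<lambda>v. f (b # v)) (a # take i xs) (take j ys) * on_prod g (drop i xs) (drop j ys))"
    by (simp only: conv_pair_Cons1) simp
  moreover have "conv_pair (on_prod f) (on_prod g) (a # xs) (b # ys) = f [] * on_prod g (a # xs) (b # ys)
  + (\<Sum>j\<le>length ys. f (b # take j ys) * on_prod g (a # xs) (drop j ys))
  + (\<Sum>i\<le>length xs. f (a # take i xs) * on_prod g (drop i xs) (b # ys))
  + (\<Sum>i\<le>length xs. \<Sum>j\<le>length ys. (on_prod (\<lambda>v. f (a # v)) (take i xs) (b # take j ys)
       + on_prod (\<lambda>v. f (b # v)) (a # take i xs) (take j ys)
       + on_prod (\<lambda>v. f ((a + b) # v)) (take i xs) (take j ys))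
      * on_prod g (drop i xs) (drop j ys))"
    by (simp only: conv_pair_Cons_Cons on_prod_Cons_Cons[of f]) simp
  ultimately show ?case
    by (simp add: conv_pair_def sum.distrib algebra_simps)
qed

lemma conv_pair_tensor:
  "conv_pair (\<lambda>x y. f1 x * f2 y) (\<lambda>x y. g1 x * g2 y) xs ys = conv f1 g1 xs * conv f2 g2 ys"
  unfolding conv_pair_def conv_def sum_product
  by (intro sum.cong refl) (simp add: algebra_simps)

lemma conv_pair_cong_comp:
  assumes "\<And>x y. is_comp x \<Longrightarrow> is_comp y \<Longrightarrow> F x y = F' x y"
    and "\<And>x y. is_comp x \<Longrightarrow> is_comp y \<Longrightarrow> G x y = G' x y"
    and "is_comp xs" "is_comp ys"
  shows "conv_pair F G xs ys = conv_pair F' G' xs ys"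
  unfolding conv_pair_def using assms by (intro sum.cong refl) (simp add: is_comp_take is_comp_drop)

lemma conv_pair_split_last: "conv_pair F G xs ys = F xs ys * G [] [] +
   (\<Sum>p\<in>{..length xs} \<times> {..length ys} - {(length xs, length ys)}.
      F (take (fst p) xs) (take (snd p) ys) * G (drop (fst p) xs) (drop (snd p) ys))"
  unfolding conv_pair_def sum.cartesian_product split_def
  by (subst sum.remove[of _ "(length xs, length ys)"]) auto

lemma conv_pair_split_ends:
  assumes "xs \<noteq> [] \<or> ys \<noteq> []"
  shows "conv_pair F G xs ys = F [] [] * G xs ys + F xs ys * G [] [] +
   (\<Sum>p\<in>{..length xs} \<times> {..length ys} - {(length xs, length ys)} - {(0, 0)}.
      F (take (fst p) xs) (take (snd p) ys) * G (drop (fst p) xs) (drop (snd p) ys))"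
  unfolding conv_pair_split_last using assms
  by (subst sum.remove[of _ "(0, 0)"]) (auto simp: algebra_simps)

lemma conv_pair_right_cancel:
  assumes "Y [] [] = 1"
    and "\<And>x y. is_comp x \<Longrightarrow> is_comp y \<Longrightarrow> conv_pair X Y x y = conv_pair X' Y x y"
    and "is_comp xs" "is_comp ys"
  shows "X xs ys = X' xs ys"
  using assms(3,4)
proof (induction "length xs + length ys" arbitrary: xs ys rule: less_induct)
  case less
  let ?S = "{..length xs} \<times> {..length ys} - {(length xs, length ys)}"
  have "(\<Sum>p\<in>?S. X (take (fst p) xs) (take (snd p) ys) * Y (drop (fst p) xs) (drop (snd p) ys))
      = (\<Sum>p\<in>?S. X' (take (fst p) xs) (take (snd p) ys) * Y (drop (fst p) xs) (drop (snd p) ys))"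
  proof (rule sum.cong)
    fix p assume "p \<in> ?S"
    then have "length (take (fst p) xs) + length (take (snd p) ys) < length xs + length ys"
      by (cases p) auto
    then have "X (take (fst p) xs) (take (snd p) ys) = X' (take (fst p) xs) (take (snd p) ys)"
      using less by (intro less.hyps) (auto simp: is_comp_take)
    then show "X (take (fst p) xs) (take (snd p) ys) * Y (drop (fst p) xs) (drop (snd p) ys) =
      X' (take (fst p) xs) (take (snd p) ys) * Y (drop (fst p) xs) (drop (snd p) ys)" by simp
  qed simp
  then show ?case
    using assms(2)[OF less.prems] assms(1) by (simp add: conv_pair_split_last)
qed

lemma conv_pair_square_inj:
  assumes "X [] [] = 1" "X' [] [] = 1" "(2::'k::field) \<noteq> 0"
    and "\<And>x y. is_comp x \<Longrightarrow> is_comp y \<Longrightarrow> conv_pair X X x y = conv_pair X' X' x y"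
    and "is_comp xs" "is_comp ys"
  shows "X xs ys = (X' xs ys :: 'k)"
  using assms(5,6)
proof (induction "length xs + length ys" arbitrary: xs ys rule: less_induct)
  case less
  show ?case
  proof (cases "xs = [] \<and> ys = []")
    case True
    then show ?thesis using assms by simp
  next
    case False
    then have ne: "xs \<noteq> [] \<or> ys \<noteq> []" by simp
    let ?S = "{..length xs} \<times> {..length ys} - {(length xs, length ys)} - {(0, 0)}"
    have "(\<Sum>p\<in>?S. X (take (fst p) xs) (take (snd p) ys) * X (drop (fst p) xs) (drop (snd p) ys))
        = (\<Sum>p\<in>?S. X' (take (fst p) xs) (take (snd p) ys) * X' (drop (fst p) xs) (drop (snd p) ys))"
    proof (rule sum.cong)
      fix p assume "p \<in> ?S"
      then have "length (take (fst p) xs) + length (take (snd p) ys) < length xs + length ys"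
        "length (drop (fst p) xs) + length (drop (snd p) ys) < length xs + length ys"
        by (cases p, auto)+
      then have "X (take (fst p) xs) (take (snd p) ys) = X' (take (fst p) xs) (take (snd p) ys)"
        "X (drop (fst p) xs) (drop (snd p) ys) = X' (drop (fst p) xs) (drop (snd p) ys)"
        using less by (auto intro!: less.hyps simp: is_comp_take is_comp_drop)
      then show "X (take (fst p) xs) (take (snd p) ys) * X (drop (fst p) xs) (drop (snd p) ys) =
        X' (take (fst p) xs) (take (snd p) ys) * X' (drop (fst p) xs) (drop (snd p) ys)" by simp
    qed simp
    then have "2 * X xs ys = 2 * X' xs ys"
      using assms(4)[OF less.prems] assms(1,2)
      by (simp add: conv_pair_split_ends[OF ne] algebra_simps)
    then show ?thesis using assms(3) by simp
  qed
qed

lemma is_char_conv: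
  assumes "is_char f" "is_char g"
  shows "is_char (conv f g)"
proof -
  have "conv f g \<alpha> * conv f g \<beta> = on_prod (conv f g) \<alpha> \<beta>" if "is_comp \<alpha>" "is_comp \<beta>" for \<alpha> \<beta>
  proof -
    have "conv f g \<alpha> * conv f g \<beta> = conv_pair (\<lambda>x y. f x * f y) (\<lambda>x y. g x * g y) \<alpha> \<beta>"
      by (simp add: conv_pair_tensor)
    also have "\<dots> = conv_pair (on_prod f) (on_prod g) \<alpha> \<beta>"
      using assms that by (intro conv_pair_cong_comp) (auto simp: is_char_on_prod)
    also have "\<dots> = on_prod (conv f g) \<alpha> \<beta>"
      by (simp add: on_prod_conv)
    finally show ?thesis .
  qed
  then show ?thesis
    using assms by (simp add: is_char_on_prod)
qed

lemma on_prod_counit: "on_prod (counit :: nat list \<Rightarrow> 'k::field) xs ys = counit xs * counit ys"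
proof (cases "xs = [] \<or> ys = []")
  case True
  then show ?thesis by auto
next
  case False
  then have "counit \<gamma> = (0::'k)" if "\<gamma> \<in># qsh xs ys" for \<gamma>
    using length_le_qsh[OF that] by (cases \<gamma>) auto
  then have "on_prod counit xs ys = (0::'k)"
    unfolding on_prod_def by (intro sum_mset.neutral) auto
  then show ?thesis
    using False by (auto simp: neq_Nil_conv)
qed

lemma is_char_conv_inv:
  assumes "is_char \<phi>"
  shows "is_char (conv_inv \<phi>)"
proof -
  let ?\<psi> = "conv_inv \<phi>"
  have unit: "\<phi> [] = 1"
    using assms by (simp add: is_char_def)
  have "on_prod ?\<psi> \<alpha> \<beta> = ?\<psi> \<alpha> * ?\<psi> \<beta>" if "is_comp \<alpha>" "is_comp \<beta>" for \<alpha> \<beta>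
  proof (rule conv_pair_right_cancel[where Y = "on_prod \<phi>"])
    fix x y :: "nat list" assume xy: "is_comp x" "is_comp y"
    have "conv_pair (on_prod ?\<psi>) (on_prod \<phi>) x y = counit x * counit y"
      by (simp add: on_prod_conv[symmetric] conv_inv_left[of \<phi>, OF unit] on_prod_counit)
    moreover have "conv_pair (\<lambda>x y. ?\<psi> x * ?\<psi> y) (on_prod \<phi>) x y =
        conv_pair (\<lambda>x y. ?\<psi> x * ?\<psi> y) (\<lambda>x y. \<phi> x * \<phi> y) x y"
      using assms xy by (intro conv_pair_cong_comp) (auto simp: is_char_on_prod)
    moreover have "\<dots> = counit x * counit y"
      by (simp add: conv_pair_tensor conv_inv_left[of \<phi>, OF unit])
    ultimately show "conv_pair (on_prod ?\<psi>) (on_prod \<phi>) x y =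
        conv_pair (\<lambda>x y. ?\<psi> x * ?\<psi> y) (on_prod \<phi>) x y"
      by simp
  qed (use that unit in auto)
  then show ?thesis
    by (simp add: is_char_on_prod)
qed

lemma is_char_conv_sqrt:
  assumes "is_char \<chi>" "(2::'k::field) \<noteq> 0"
  shows "is_char (conv_sqrt (\<chi> :: nat list \<Rightarrow> 'k))"
proof -
  let ?m = "conv_sqrt \<chi>"
  have square: "conv ?m ?m = \<chi>"
    using assms by (simp add: conv_sqrt_square is_char_def)
  have "on_prod ?m \<alpha> \<beta> = ?m \<alpha> * ?m \<beta>" if "is_comp \<alpha>" "is_comp \<beta>" for \<alpha> \<beta>
  proof (rule conv_pair_square_inj[OF _ _ assms(2)])
    fix x y :: "nat list" assume "is_comp x" "is_comp y"
    then have "conv_pair (on_prod ?m) (on_prod ?m) x y = \<chi> x * \<chi> y"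
      using assms by (simp add: on_prod_conv[symmetric] square is_char_on_prod)
    moreover have "conv_pair (\<lambda>x y. ?m x * ?m y) (\<lambda>x y. ?m x * ?m y) x y = \<chi> x * \<chi> y"
      by (simp add: conv_pair_tensor square)
    ultimately show "conv_pair (on_prod ?m) (on_prod ?m) x y =
        conv_pair (\<lambda>x y. ?m x * ?m y) (\<lambda>x y. ?m x * ?m y) x y"
      by simp
  qed (use that in auto)
  then show ?thesis
    by (simp add: is_char_on_prod)
qed

lemma is_char_bar:
  assumes "is_char \<phi>"
  shows "is_char (bar \<phi>)"
proof -
  have "bar \<phi> \<alpha> * bar \<phi> \<beta> = on_prod (bar \<phi>) \<alpha> \<beta>" if "is_comp \<alpha>" "is_comp \<beta>" for \<alpha> \<beta>
  proof -
    have "on_prod (bar \<phi>) \<alpha> \<beta> = (\<Sum>\<gamma>\<in>#qsh \<alpha> \<beta>. (-1) ^ (sum_list \<alpha> + sum_list \<beta>) * \<phi> \<gamma>)"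
      unfolding on_prod_def bar_def by (intro arg_cong[where f = sum_mset] image_mset_cong)
        (simp add: sum_list_qsh)
    also have "\<dots> = (-1) ^ (sum_list \<alpha> + sum_list \<beta>) * on_prod \<phi> \<alpha> \<beta>"
      by (simp add: on_prod_def sum_mset_distrib_left)
    finally show ?thesis
      using assms that by (simp add: is_char_on_prod bar_def power_add)
  qed
  then show ?thesis
    using assms by (simp add: is_char_on_prod)
qed

lemma is_char_zeta: "is_char (zeta :: nat list \<Rightarrow> 'k::field)"
proof -
  have "(zeta \<alpha> :: 'k) * zeta \<beta> = on_prod zeta \<alpha> \<beta>" if "is_comp \<alpha>" "is_comp \<beta>" for \<alpha> \<beta>
  proof (cases "length \<alpha> \<le> 1 \<and> length \<beta> \<le> 1")
    case True
    with that show ?thesis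
      by (cases \<alpha>; cases \<beta>) (auto simp: zeta_def on_prod_def)
  next
    case False
    then have "zeta \<gamma> = (0::'k)" if "\<gamma> \<in># qsh \<alpha> \<beta>" for \<gamma>
      using length_le_qsh[OF that] by (auto simp: zeta_def)
    then have "on_prod zeta \<alpha> \<beta> = (0::'k)"
      unfolding on_prod_def by (intro sum_mset.neutral) auto
    with False show ?thesis
      by (auto simp: zeta_def)
  qed
  then show ?thesis
    by (simp add: is_char_on_prod zeta_def)
qed

section \<open>The even-odd factorisation of a character\<close>

lemma is_functional_conv:
  assumes "is_functional f" "is_functional g"
  shows "is_functional (conv f g)"
  unfolding is_functional_def
proof (intro allI impI)
  fix xs :: "nat list" assume "\<not> is_comp xs"
  then have "\<not> is_comp (take i xs) \<or> \<not> is_comp (drop i xs)" for i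
    using is_comp_append[of "take i xs" "drop i xs"] by simp
  then show "conv f g xs = 0"
    using assms unfolding conv_def is_functional_def by (intro sum.neutral ballI) auto
qed

lemma is_functional_bar: "is_functional f \<Longrightarrow> is_functional (bar f)"
  by (simp add: is_functional_def bar_def)

lemma is_functional_zeta: "is_functional zeta"
  by (simp add: is_functional_def zeta_def)

lemma is_functional_counit: "is_functional counit"
  by (simp add: is_functional_def counit_def)

lemma is_functional_conv_inv:
  assumes "is_functional \<phi>"
  shows "is_functional (conv_inv \<phi>)"
  unfolding is_functional_def
proof (intro allI impI)
  fix xs :: "nat list"
  show "\<not> is_comp xs \<Longrightarrow> conv_inv \<phi> xs = 0"
  proof (induction xs rule: length_induct)
    case (1 xs)
    then obtain a ys where xs: "xs = a # ys"
      by (cases xs) auto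
    have "\<not> is_comp (take i xs) \<or> \<not> is_comp (drop i xs)" for i
      using "1.prems" is_comp_append[of "take i xs" "drop i xs"] by simp
    moreover have "length (take i xs) < length xs" if "i < length xs" for i
      using that by simp
    ultimately have "conv_inv \<phi> (take i xs) * \<phi> (drop i xs) = 0" if "i < length xs" for i
      using assms that "1.IH" unfolding is_functional_def by (metis mult_eq_0_iff)
    then have "(\<Sum>i<length xs. conv_inv \<phi> (take i xs) * \<phi> (drop i xs)) = 0"
      by (intro sum.neutral) simp
    then show ?case
      unfolding xs conv_inv.simps by simp
  qed
qed

lemma is_functional_conv_sqrt:
  assumes "is_functional \<chi>"
  shows "is_functional (conv_sqrt \<chi>)"
  unfolding is_functional_def
proof (intro allI impI)
  fix xs :: "nat list"
  show "\<not> is_comp xs \<Longrightarrow> conv_sqrt \<chi> xs = 0"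
  proof (induction xs rule: length_induct)
    case (1 xs)
    then obtain a ys where xs: "xs = a # ys"
      by (cases xs) auto
    have "\<not> is_comp (take i xs) \<or> \<not> is_comp (drop i xs)" for i
      using "1.prems" is_comp_append[of "take i xs" "drop i xs"] by simp
    moreover have "length (take i xs) < length xs" "length (drop i xs) < length xs"
      if "i \<in> {1..<length xs}" for i
      using that by auto
    ultimately have "conv_sqrt \<chi> (take i xs) * conv_sqrt \<chi> (drop i xs) = 0"
      if "i \<in> {1..<length xs}" for i
      using that "1.IH" by (metis mult_eq_0_iff)
    then have "(\<Sum>i\<in>{1..<length xs}. conv_sqrt \<chi> (take i xs) * conv_sqrt \<chi> (drop i xs)) = 0"
      by (intro sum.neutral) simp
    moreover have "\<chi> xs = 0"
      using assms "1.prems" by (simp add: is_functional_def)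
    ultimately show ?case
      unfolding xs conv_sqrt.simps by simp
  qed
qed

lemma is_functional_eqI:
  assumes "is_functional f" "is_functional g" and "\<And>xs. is_comp xs \<Longrightarrow> f xs = g xs"
  shows "f = g"
proof
  fix x show "f x = g x"
    using assms by (cases "is_comp x") (auto simp: is_functional_def)
qed

text \<open>If \<open>\<phi> = \<phi>\<^sub>+ \<phi>\<^sub>-\<close> then \<open>bar \<phi> = \<phi>\<^sub>+ \<phi>\<^sub>-\<^bsup>-1\<^esup>\<close>, so \<open>\<phi>\<^sub>-\<close> is the square root of
  \<open>(bar \<phi>)\<^bsup>-1\<^esup> \<phi>\<close> and \<open>\<phi>\<^sub>+ = (bar \<phi>) \<phi>\<^sub>-\<close>.\<close>

definition odd_factor :: "(nat list \<Rightarrow> 'k::field) \<Rightarrow> nat list \<Rightarrow> 'k" where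
  "odd_factor \<phi> = conv_sqrt (conv (conv_inv (bar \<phi>)) \<phi>)"

definition even_factor :: "(nat list \<Rightarrow> 'k::field) \<Rightarrow> nat list \<Rightarrow> 'k" where
  "even_factor \<phi> = conv (bar \<phi>) (odd_factor \<phi>)"

lemma odd_factor_Nil [simp]: "odd_factor \<phi> [] = 1"
  by (simp add: odd_factor_def)

lemma conv_odd_factor_odd_factor:
  assumes "\<phi> [] = 1" "(2::'k::field) \<noteq> 0"
  shows "conv (odd_factor \<phi>) (odd_factor \<phi>) = conv (conv_inv (bar \<phi>)) (\<phi> :: nat list \<Rightarrow> 'k)"
  unfolding odd_factor_def using assms by (intro conv_sqrt_square) simp_all

lemma conv_even_factor_odd_factor:
  assumes "\<phi> [] = 1" "(2::'k::field) \<noteq> 0"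
  shows "conv (even_factor \<phi>) (odd_factor \<phi>) = (\<phi> :: nat list \<Rightarrow> 'k)"
proof -
  have "conv (even_factor \<phi>) (odd_factor \<phi>) = conv (conv (bar \<phi>) (conv_inv (bar \<phi>))) \<phi>"
    by (simp only: even_factor_def conv_assoc conv_odd_factor_odd_factor[of \<phi>, OF assms])
  then show ?thesis
    using assms by (simp add: conv_inv_right)
qed

text \<open>\<open>bar (odd_factor \<phi>)\<close> and the inverse of \<open>odd_factor \<phi>\<close> are square roots of the same
  functional, the inverse of \<open>(bar \<phi>)\<^bsup>-1\<^esup> \<phi>\<close>.\<close>

lemma bar_odd_factor:
  assumes unit: "\<phi> [] = 1" and two: "(2::'k::field) \<noteq> 0"
  shows "bar (odd_factor \<phi>) = conv_inv (odd_factor (\<phi> :: nat list \<Rightarrow> 'k))"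
proof -
  define \<iota> where "\<iota> = conv_inv (bar \<phi>)"
  define \<chi> where "\<chi> = conv \<iota> \<phi>"
  define m where "m = odd_factor \<phi>"
  let ?\<mu> = "conv_inv m"
  have \<chi>_unit: "\<chi> [] = 1"
    using unit by (simp add: \<chi>_def \<iota>_def)
  have \<iota>: "conv (bar \<phi>) \<iota> = counit" and bar_\<iota>: "conv (bar \<iota>) \<phi> = counit"
    using unit arg_cong[OF conv_inv_left[of "bar \<phi>"], of bar]
    by (simp_all add: \<iota>_def conv_inv_right bar_conv)
  have square: "conv m m = \<chi>"
    unfolding m_def \<chi>_def \<iota>_def using unit two by (rule conv_odd_factor_odd_factor)
  have "conv (conv ?\<mu> ?\<mu>) \<chi> = conv ?\<mu> (conv (conv ?\<mu> m) m)"
    by (simp only: square[symmetric] conv_assoc)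
  also have "\<dots> = counit"
    by (simp add: m_def conv_inv_left)
  finally have \<mu>_square: "conv (conv ?\<mu> ?\<mu>) \<chi> = counit" .
  have "conv (conv (bar m) (bar m)) \<chi> = conv (bar \<chi>) \<chi>"
    by (simp only: bar_conv[symmetric] square)
  also have "\<dots> = conv (bar \<iota>) (conv (conv (bar \<phi>) \<iota>) \<phi>)"
    by (simp only: \<chi>_def bar_conv conv_assoc)
  also have "\<dots> = conv (conv ?\<mu> ?\<mu>) \<chi>"
    by (simp only: \<iota> conv_counit_left bar_\<iota> \<mu>_square)
  finally have "conv (bar m) (bar m) = conv ?\<mu> ?\<mu>"
    using \<chi>_unit by (rule conv_right_cancel[rotated])
  then show ?thesis
    unfolding m_def by (rule conv_square_inj[OF _ _ two, rotated 2]) simp_all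
qed

lemma bar_even_factor:
  assumes "\<phi> [] = 1" "(2::'k::field) \<noteq> 0"
  shows "bar (even_factor \<phi>) = even_factor (\<phi> :: nat list \<Rightarrow> 'k)"
proof -
  have "bar (even_factor \<phi>) = conv (conv (even_factor \<phi>) (odd_factor \<phi>)) (conv_inv (odd_factor \<phi>))"
    by (simp only: even_factor_def bar_conv bar_odd_factor[of \<phi>, OF assms] bar_bar
        conv_even_factor_odd_factor[of \<phi>, OF assms, unfolded even_factor_def])
  then show ?thesis
    by (simp add: conv_assoc conv_inv_right)
qed

lemma even_odd_factors_exist:
  assumes char: "is_char \<phi>" and functional: "is_functional \<phi>" and two: "(2::'k::field) \<noteq> 0"
  shows "even_odd_factors (\<phi> :: nat list \<Rightarrow> 'k) (even_factor \<phi>) (odd_factor \<phi>)"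
proof -
  have unit: "\<phi> [] = 1"
    using char by (simp add: is_char_def)
  have odd_char: "is_char (odd_factor \<phi>)"
    unfolding odd_factor_def
    using char two by (intro is_char_conv_sqrt is_char_conv is_char_conv_inv is_char_bar)
  have odd_functional: "is_functional (odd_factor \<phi>)"
    unfolding odd_factor_def using functional
    by (intro is_functional_conv_sqrt is_functional_conv is_functional_conv_inv is_functional_bar)
  have "is_char (even_factor \<phi>)"
    unfolding even_factor_def using char odd_char by (intro is_char_conv is_char_bar)
  moreover have "is_functional (even_factor \<phi>)"
    unfolding even_factor_def using functional odd_functional by (intro is_functional_conv is_functional_bar)
  moreover note odd_char odd_functional
  ultimately show ?thesis
    unfolding even_odd_factors_def is_even_def is_odd_def
    by (simp add: bar_even_factor[of \<phi>, OF unit two] bar_odd_factor[of \<phi>, OF unit two] conv_inv_left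
        conv_inv_right conv_even_factor_odd_factor[of \<phi>, OF unit two])
qed

lemma even_odd_factors_unique:
  assumes functional: "is_functional \<phi>" and two: "(2::'k::field) \<noteq> 0"
    and factors: "even_odd_factors (\<phi> :: nat list \<Rightarrow> 'k) p m"
  shows "p = even_factor \<phi> \<and> m = odd_factor \<phi>"
proof -
  have p_fun: "is_functional p" and m_fun: "is_functional m" and "is_char p" "is_char m"
    and p_even: "is_even p" and m_odd: "is_odd m"
    and eq: "\<And>\<alpha>. is_comp \<alpha> \<Longrightarrow> \<phi> \<alpha> = conv p m \<alpha>"
    using factors by (auto simp: even_odd_factors_def)
  then have p_unit: "p [] = 1" and m_unit: "m [] = 1"
    by (simp_all add: is_char_def)
  have \<phi>: "\<phi> = conv p m"
    using eq by (intro is_functional_eqI functional is_functional_conv p_fun m_fun)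
  have bar_p: "bar p = p"
    using p_even by (intro is_functional_eqI is_functional_bar p_fun) (simp_all add: is_even_def)
  have bar_m: "conv (bar m) m = counit"
    using m_odd by (intro is_functional_eqI is_functional_conv is_functional_bar m_fun
        is_functional_counit) (simp_all add: is_odd_def)
  have p: "conv (bar \<phi>) m = p"
    by (simp add: \<phi> bar_conv bar_p conv_assoc bar_m)
  have bar_unit: "bar \<phi> [] = 1"
    using p_unit m_unit by (simp add: \<phi>)
  have "conv m m = conv (conv (conv_inv (bar \<phi>)) (bar \<phi>)) (conv m m)"
    by (simp add: conv_inv_left[of "bar \<phi>", OF bar_unit])
  also have "\<dots> = conv (conv_inv (bar \<phi>)) \<phi>"
    by (simp only: conv_assoc[of _ "bar \<phi>"] conv_assoc[of "bar \<phi>" m m, symmetric] p \<phi>[symmetric])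
  also have "\<dots> = conv (odd_factor \<phi>) (odd_factor \<phi>)"
    using two bar_unit by (simp add: conv_odd_factor_odd_factor)
  finally have "m = odd_factor \<phi>"
    by (rule conv_square_inj[where X = m, OF m_unit _ two, rotated]) (simp add: odd_factor_def)
  with p show ?thesis
    by (simp add: even_factor_def)
qed

lemma even_odd_part_eq:
  assumes "is_char \<phi>" "is_functional \<phi>" "(2::'k::field) \<noteq> 0"
  shows "even_part (\<phi> :: nat list \<Rightarrow> 'k) = even_factor \<phi>" "odd_part \<phi> = odd_factor \<phi>"
proof -
  have "(THE pm. even_odd_factors \<phi> (fst pm) (snd pm)) = (even_factor \<phi>, odd_factor \<phi>)"
  proof (rule the_equality)
    fix pm assume "even_odd_factors \<phi> (fst pm) (snd pm)"
    from even_odd_factors_unique[OF assms(2,3) this] show "pm = (even_factor \<phi>, odd_factor \<phi>)"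
      by (simp add: prod_eq_iff)
  qed (simp add: even_odd_factors_exist[OF assms])
  then show "even_part \<phi> = even_factor \<phi>" "odd_part \<phi> = odd_factor \<phi>"
    by (simp_all add: even_part_def odd_part_def)
qed

section \<open>Central binomial coefficients and super Catalan numbers\<close>

lemma gbinomial_minus_half:
  "((- (1 / 2) :: 'a::field_char_0) gchoose k) = (- 1) ^ k * of_nat ((2 * k) choose k) / 4 ^ k"
proof -
  have "(fact (2 * k) :: 'a) = 4 ^ k * pochhammer (1 / 2) k * fact k"
    using fact_double[of k] by (simp add: power_mult)
  moreover have "(of_nat ((2 * k) choose k) :: 'a) = fact (2 * k) / (fact k * fact k)"
    by (simp add: binomial_fact)
  ultimately show ?thesis
    by (simp add: gbinomial_pochhammer field_simps)
qed

lemma central_binomial_convolution: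
  "(\<Sum>i\<le>m. ((2 * i) choose i) * ((2 * (m - i)) choose (m - i))) = 4 ^ m"
proof -
  have "(- 1 :: real) ^ m = (- 1 gchoose m)"
    using gbinomial_minus[of "1::real" m] by (simp add: binomial_gbinomial[symmetric])
  also have "\<dots> = (\<Sum>i\<le>m. (- (1 / 2) gchoose i) * (- (1 / 2) gchoose (m - i)))"
    using gbinomial_Vandermonde[of "- (1 / 2) :: real" "- (1 / 2)" m] by (simp add: atLeast0AtMost)
  also have "\<dots> = (\<Sum>i\<le>m. (- 1) ^ m / 4 ^ m * real (((2 * i) choose i) * ((2 * (m - i)) choose (m - i))))"
  proof (rule sum.cong)
    fix i assume "i \<in> {..m}"
    then have "(- 1 :: real) ^ i * (- 1) ^ (m - i) = (- 1) ^ m" "(4 :: real) ^ i * 4 ^ (m - i) = 4 ^ m"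
      by (simp_all flip: power_add)
    then show "(- (1 / 2) gchoose i) * (- (1 / 2) gchoose (m - i)) =
        (- 1) ^ m / 4 ^ m * real (((2 * i) choose i) * ((2 * (m - i)) choose (m - i)))"
      by (simp add: gbinomial_minus_half field_simps)
  qed simp
  also have "\<dots> = (- 1) ^ m / 4 ^ m * real (\<Sum>i\<le>m. ((2 * i) choose i) * ((2 * (m - i)) choose (m - i)))"
    by (simp only: sum_distrib_left[symmetric] of_nat_sum)
  finally have "real (\<Sum>i\<le>m. ((2 * i) choose i) * ((2 * (m - i)) choose (m - i))) = 4 ^ m"
    by (simp add: field_simps)
  then show ?thesis
    by (metis of_nat_eq_of_nat_power_cancel_iff of_nat_numeral)
qed

definition central_ratio :: "nat \<Rightarrow> 'k::field" where
  "central_ratio m = of_nat ((2 * m) choose m) / 2 ^ (2 * m)"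

lemma central_ratio_0 [simp]: "central_ratio 0 = 1"
  by (simp add: central_ratio_def)

lemma central_ratio_convolution:
  assumes "(2::'k::field) \<noteq> 0"
  shows "(\<Sum>i\<le>m. central_ratio i * central_ratio (m - i)) = (1::'k)"
proof -
  have "(\<Sum>i\<le>m. central_ratio i * central_ratio (m - i)) =
      (\<Sum>i\<le>m. of_nat (((2 * i) choose i) * ((2 * (m - i)) choose (m - i))) / (2::'k) ^ (2 * m))"
  proof (rule sum.cong)
    fix i assume "i \<in> {..m}"
    then have "2 * i + 2 * (m - i) = 2 * m"
      by simp
    then have "(2::'k) ^ (2 * i) * 2 ^ (2 * (m - i)) = 2 ^ (2 * m)"
      by (simp only: power_add[symmetric])
    then show "central_ratio i * central_ratio (m - i) =
        of_nat (((2 * i) choose i) * ((2 * (m - i)) choose (m - i))) / (2::'k) ^ (2 * m)"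
      by (simp add: central_ratio_def)
  qed simp
  also have "\<dots> = of_nat (4 ^ m) / 2 ^ (2 * m)"
    by (simp only: sum_divide_distrib[symmetric] of_nat_sum[symmetric] central_binomial_convolution)
  also have "\<dots> = 1"
    using assms mult_eq_0_iff[of "2::'k" 2] by (simp add: power_mult)
  finally show ?thesis .
qed

lemma sum_atMost_double_even_odd:
  "(\<Sum>j\<le>2 * (m::nat). f j) = (\<Sum>i\<le>m. f (2 * i)) + (\<Sum>i<m. f (2 * i + 1) :: 'a::comm_monoid_add)"
  by (induction m) (simp_all add: ac_simps)

lemma sum_atMost_Suc_double_even_odd:
  "(\<Sum>j\<le>2 * (m::nat) + 1. f j) = (\<Sum>i\<le>m. f (2 * i)) + (\<Sum>i\<le>m. f (2 * i + 1) :: 'a::comm_monoid_add)"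
  by (induction m) (simp_all add: ac_simps)

text \<open>The sequence \<open>c\<^sub>j = central_ratio (j div 2)\<close> is the coefficient sequence of
  \<open>(1 + t) / sqrt (1 - t\<^sup>2)\<close>, whose square is \<open>(1 + t) / (1 - t) = 2 / (1 - t) - 1\<close>.\<close>

lemma central_ratio_half_convolution:
  assumes two: "(2::'k::field) \<noteq> 0" and "1 \<le> J"
  shows "(\<Sum>j\<le>J. central_ratio (j div 2) * central_ratio ((J - j) div 2)) = (2::'k)"
proof -
  let ?c = "\<lambda>i. central_ratio i :: 'k"
  show ?thesis
  proof (cases "even J")
    case True
    then obtain M where J: "J = 2 * M" by blast
    with assms have "1 \<le> M" by simp
    have "(\<Sum>i<M. ?c i * ?c ((2 * M - (2 * i + 1)) div 2)) = (\<Sum>i\<le>M - 1. ?c i * ?c (M - 1 - i))"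
    proof (rule sum.cong)
      show "{..<M} = {..M - 1}"
        using \<open>1 \<le> M\<close> by auto
      fix i assume "i \<in> {..M - 1}"
      then have "2 * M - (2 * i + 1) = 2 * (M - 1 - i) + 1"
        using \<open>1 \<le> M\<close> by simp
      then show "?c i * ?c ((2 * M - (2 * i + 1)) div 2) = ?c i * ?c (M - 1 - i)"
        by simp
    qed
    moreover have "(\<Sum>i\<le>M. ?c i * ?c ((2 * M - 2 * i) div 2)) = (\<Sum>i\<le>M. ?c i * ?c (M - i))"
      by (intro sum.cong) (auto simp flip: diff_mult_distrib2)
    ultimately show ?thesis
      unfolding J sum_atMost_double_even_odd
      using central_ratio_convolution[OF two, of M] central_ratio_convolution[OF two, of "M - 1"]
      by simp
  next
    case False
    then obtain M where J: "J = 2 * M + 1" by (blast elim: oddE)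
    have "2 * M + 1 - 2 * i = 2 * (M - i) + 1" "2 * M + 1 - (2 * i + 1) = 2 * (M - i)"
      if "i \<le> M" for i
      using that by simp_all
    then have "(\<Sum>i\<le>M. ?c i * ?c ((2 * M + 1 - 2 * i) div 2)) = (\<Sum>i\<le>M. ?c i * ?c (M - i))"
      "(\<Sum>i\<le>M. ?c i * ?c ((2 * M + 1 - (2 * i + 1)) div 2)) = (\<Sum>i\<le>M. ?c i * ?c (M - i))"
      by (auto intro!: sum.cong)
    then show ?thesis
      unfolding J sum_atMost_Suc_double_even_odd using central_ratio_convolution[OF two] by simp
  qed
qed

text \<open>An integer-valued recursion for the super Catalan numbers; it shows that the division in
  the definition of \<open>superC\<close> is exact.\<close>

fun super_catalan_int :: "nat \<Rightarrow> nat \<Rightarrow> int" where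
  "super_catalan_int 0 r = int ((2 * r) choose r)"
| "super_catalan_int (Suc p) r = 4 * super_catalan_int p r - super_catalan_int p (Suc r)"

lemma super_catalan_int_fact:
  "of_int (super_catalan_int p r) * (fact p * fact (p + r) * fact r) = (fact (2 * p) * fact (2 * r) :: real)"
proof (induction p arbitrary: r)
  case 0
  have "fact r * fact r * ((2 * r) choose r) = (fact (2 * r) :: nat)"
    using binomial_fact_lemma[of r "2 * r"] by (simp add: mult_2)
  then have "fact r * fact r * real ((2 * r) choose r) = fact (2 * r)"
    by (metis of_nat_fact of_nat_mult)
  then show ?case by (simp add: algebra_simps)
next
  case (Suc p)
  let ?F = "fact p * fact (p + r) * fact r :: real"
  let ?G = "fact (2 * p) * fact (2 * r) :: real"
  let ?s1 = "real_of_int (super_catalan_int p r)"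
  let ?s2 = "real_of_int (super_catalan_int p (Suc r))"
  have IH1: "?s1 * ?F = ?G"
    by (rule Suc.IH)
  have "(real r + 1) * (?s2 * ?F * (p + r + 1)) = (real r + 1) * (2 * (2 * r + 1) * ?G)"
    using Suc.IH[of "Suc r"] by (simp add: algebra_simps)
  then have IH2: "?s2 * ?F * (p + r + 1) = 2 * (2 * r + 1) * ?G"
    by (subst (asm) mult_left_cancel) simp_all
  have "of_int (super_catalan_int (Suc p) r) * (fact (Suc p) * fact (Suc p + r) * fact r)
      = 4 * (p + 1) * (p + r + 1) * (?s1 * ?F) - (p + 1) * (?s2 * ?F * (p + r + 1))"
    by (simp add: algebra_simps)
  also have "\<dots> = (2 * p + 2) * (2 * p + 1) * ?G"
    unfolding IH1 IH2 by (simp add: algebra_simps)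
  also have "\<dots> = fact (2 * Suc p) * fact (2 * r)"
    by (simp add: algebra_simps)
  finally show ?case .
qed

lemma superC_eq_super_catalan_int: "int (superC p r) = super_catalan_int p r"
proof -
  have "real_of_int (super_catalan_int p r * int (fact p * fact (p + r) * fact r)) =
      real_of_int (int (fact (2 * p) * fact (2 * r)))"
    using super_catalan_int_fact[of p r] by simp
  then have "super_catalan_int p r * int (fact p * fact (p + r) * fact r) = int (fact (2 * p) * fact (2 * r))"
    by (simp only: of_int_eq_iff)
  moreover have "int (fact p * fact (p + r) * fact r) > 0"
    by (simp add: fact_gt_zero)
  ultimately show ?thesis
    unfolding superC_def
    by (metis nonzero_mult_div_cancel_right of_nat_eq_0_iff of_nat_less_0_iff zdiv_int
        less_numeral_extra(3))
qed

lemma superC_0: "superC 0 r = (2 * r) choose r"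
  using superC_eq_super_catalan_int[of 0 r] by simp

lemma superC_Suc: "superC (Suc p) r + superC p (Suc r) = 4 * superC p r"
  using superC_eq_super_catalan_int[of "Suc p" r] superC_eq_super_catalan_int[of p "Suc r"]
    superC_eq_super_catalan_int[of p r]
  by simp

section \<open>The odd part of the universal character\<close>

definition even_parts :: "nat list \<Rightarrow> nat" where
  "even_parts \<beta> = length (filter even \<beta>)"

definition odd_parts :: "nat list \<Rightarrow> nat" where
  "odd_parts \<beta> = length (filter odd \<beta>)"

lemma even_parts_simps [simp]:
  "even_parts [] = 0" "even_parts (a # xs) = (if even a then 1 else 0) + even_parts xs"
  by (simp_all add: even_parts_def)

lemma odd_parts_simps [simp]:
  "odd_parts [] = 0" "odd_parts (a # xs) = (if odd a then 1 else 0) + odd_parts xs"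
  by (simp_all add: odd_parts_def)

lemma even_parts_append [simp]: "even_parts (xs @ ys) = even_parts xs + even_parts ys"
  by (simp add: even_parts_def)

lemma odd_parts_append [simp]: "odd_parts (xs @ ys) = odd_parts xs + odd_parts ys"
  by (simp add: odd_parts_def)

definition zeta_odd :: "nat list \<Rightarrow> 'k::field" where
  "zeta_odd \<beta> = (if is_comp \<beta> \<and> (\<beta> = [] \<or> odd (last \<beta>))
     then (-1) ^ even_parts \<beta> * central_ratio (odd_parts \<beta> div 2) else 0)"

definition zeta_odd_square :: "nat list \<Rightarrow> 'k::field" where
  "zeta_odd_square \<beta> = (if \<not> is_comp \<beta> then 0 else if \<beta> = [] then 1
     else if odd (last \<beta>) then 2 * (-1) ^ even_parts \<beta> else 0)"

lemma zeta_odd_Nil [simp]: "zeta_odd [] = 1"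
  by (simp add: zeta_odd_def)

lemma conv_bar_zeta_Cons:
  "conv (bar zeta) f (a # xs) = f (a # xs) + (if 0 < a then (-1) ^ a else 0) * f xs"
proof -
  have "conv (\<lambda>u. bar zeta (a # u)) f xs = conv (\<lambda>u. (if 0 < a then (-1) ^ a else 0) * counit u) f xs"
    by (intro arg_cong[where f = "\<lambda>g. conv g f xs"] ext) (auto simp: bar_def zeta_def counit_def)
  also have "\<dots> = (if 0 < a then (-1) ^ a else 0) * conv counit f xs"
    unfolding conv_def by (simp add: sum_distrib_left mult.assoc)
  finally show ?thesis
    by (simp add: conv_Cons bar_def zeta_def)
qed

lemma conv_bar_zeta_zeta_odd_square: "conv (bar zeta) zeta_odd_square = (zeta :: nat list \<Rightarrow> 'k::field)"
proof
  fix xs :: "nat list"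
  show "conv (bar zeta) zeta_odd_square xs = (zeta xs :: 'k)"
  proof (cases xs)
    case Nil
    then show ?thesis by (simp add: zeta_odd_square_def zeta_def)
  next
    case (Cons a ys)
    then show ?thesis
      by (cases ys) (auto simp: conv_bar_zeta_Cons zeta_odd_square_def zeta_def
          minus_one_power_iff power_add)
  qed
qed

lemma sum_cuts_after_odd:
  "(\<Sum>i\<le>length \<beta>. if i = 0 \<or> odd (\<beta> ! (i - 1)) then h (odd_parts (take i \<beta>)) (odd_parts (drop i \<beta>)) else 0)
   = (\<Sum>j\<le>odd_parts \<beta>. h j (odd_parts \<beta> - j))"
proof (induction \<beta> arbitrary: h)
  case Nil
  then show ?case by simp
next
  case (Cons a \<gamma>)
  have split: "(\<Sum>i\<le>length (a # \<gamma>). if i = 0 \<or> odd ((a # \<gamma>) ! (i - 1))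
        then h (odd_parts (take i (a # \<gamma>))) (odd_parts (drop i (a # \<gamma>))) else 0)
      = h 0 (odd_parts (a # \<gamma>)) + (\<Sum>i\<le>length \<gamma>. if odd ((a # \<gamma>) ! i)
        then h (odd_parts (a # take i \<gamma>)) (odd_parts (drop i \<gamma>)) else 0)"
    by (simp add: sum.atMost_Suc_shift del: sum.atMost_Suc cong: if_cong)
  show ?case
  proof (cases "odd a")
    case True
    have "(\<Sum>i\<le>length \<gamma>. if odd ((a # \<gamma>) ! i)
          then h (odd_parts (a # take i \<gamma>)) (odd_parts (drop i \<gamma>)) else 0)
        = (\<Sum>i\<le>length \<gamma>. if i = 0 \<or> odd (\<gamma> ! (i - 1))
          then h (Suc (odd_parts (take i \<gamma>))) (odd_parts (drop i \<gamma>)) else 0)"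
      using True by (intro sum.cong) (auto split: nat.split simp: nth_Cons')
    also have "\<dots> = (\<Sum>j\<le>odd_parts \<gamma>. h (Suc j) (odd_parts \<gamma> - j))"
      by (rule Cons.IH)
    finally show ?thesis
      using True split by (simp add: sum.atMost_Suc_shift del: sum.atMost_Suc)
  next
    case False
    have "(\<Sum>i\<le>length \<gamma>. if i = 0 \<or> odd (\<gamma> ! (i - 1))
          then h (odd_parts (take i \<gamma>)) (odd_parts (drop i \<gamma>)) else 0)
        = h 0 (odd_parts \<gamma>) + (\<Sum>i\<le>length \<gamma>. if odd ((a # \<gamma>) ! i)
          then h (odd_parts (a # take i \<gamma>)) (odd_parts (drop i \<gamma>)) else 0)"
      using False by (cases \<gamma>) (simp_all add: sum.atMost_Suc_shift del: sum.atMost_Suc cong: if_cong)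
    then show ?thesis
      using False split Cons.IH[of h] by simp
  qed
qed

lemma zeta_odd_take_mult_drop:
  assumes comp: "is_comp xs" and "xs \<noteq> []" "odd (last xs)" "i \<le> length xs"
  shows "zeta_odd (take i xs) * zeta_odd (drop i xs) = (-1) ^ even_parts xs *
    (if i = 0 \<or> odd (xs ! (i - 1))
     then central_ratio (odd_parts (take i xs) div 2) * central_ratio (odd_parts (drop i xs) div 2)
     else (0::'k::field))"
proof -
  have "(take i xs = [] \<or> odd (last (take i xs))) \<longleftrightarrow> (i = 0 \<or> odd (xs ! (i - 1)))"
    using assms by (cases i) (auto simp: take_Suc_conv_app_nth)
  moreover have "drop i xs = [] \<or> odd (last (drop i xs))"
    using assms by (cases "i = length xs") auto
  moreover have "(-1::'k) ^ even_parts (take i xs) * (-1) ^ even_parts (drop i xs) = (-1) ^ even_parts xs"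
    by (simp flip: power_add even_parts_append)
  ultimately show ?thesis
    using comp by (auto simp: zeta_odd_def is_comp_take is_comp_drop)
qed

lemma conv_zeta_odd_zeta_odd_odd_last:
  assumes two: "(2::'k::field) \<noteq> 0" and "is_comp xs" "xs \<noteq> []" "odd (last xs)"
  shows "conv zeta_odd zeta_odd xs = (2 * (-1) ^ even_parts xs :: 'k)"
proof -
  let ?c = "\<lambda>j. central_ratio (j div 2) :: 'k"
  have "conv zeta_odd zeta_odd xs = (-1) ^ even_parts xs * (\<Sum>i\<le>length xs.
      if i = 0 \<or> odd (xs ! (i - 1)) then ?c (odd_parts (take i xs)) * ?c (odd_parts (drop i xs)) else 0)"
    unfolding conv_def sum_distrib_left using assms by (intro sum.cong) (auto simp: zeta_odd_take_mult_drop)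
  also have "\<dots> = (-1) ^ even_parts xs * (\<Sum>j\<le>odd_parts xs. ?c j * ?c (odd_parts xs - j))"
    by (simp only: sum_cuts_after_odd[where h = "\<lambda>j k. ?c j * ?c k"])
  also have "\<dots> = 2 * (-1) ^ even_parts xs"
  proof -
    have "last xs \<in> set (filter odd xs)"
      using assms by simp
    then have "1 \<le> odd_parts xs"
      unfolding odd_parts_def by (cases "filter odd xs") auto
    then show ?thesis
      by (simp add: central_ratio_half_convolution[OF two])
  qed
  finally show ?thesis
    by simp
qed

lemma conv_zeta_odd_zeta_odd:
  assumes two: "(2::'k::field) \<noteq> 0"
  shows "conv zeta_odd zeta_odd = (zeta_odd_square :: nat list \<Rightarrow> 'k)"
proof
  fix xs :: "nat list"
  have "is_functional (conv zeta_odd (zeta_odd :: nat list \<Rightarrow> 'k))"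
    by (intro is_functional_conv) (simp_all add: is_functional_def zeta_odd_def)
  moreover have "conv zeta_odd zeta_odd xs = (0::'k)" if "is_comp xs" "xs \<noteq> []" "even (last xs)"
  proof -
    have "zeta_odd (take i xs) * zeta_odd (drop i xs) = (0::'k)" if "i \<le> length xs" for i
      using that \<open>xs \<noteq> []\<close> \<open>even (last xs)\<close> by (cases "i = length xs") (auto simp: zeta_odd_def)
    then show ?thesis
      unfolding conv_def by (intro sum.neutral) simp
  qed
  ultimately show "conv zeta_odd zeta_odd xs = (zeta_odd_square xs :: 'k)"
    using conv_zeta_odd_zeta_odd_odd_last[OF two, of xs]
    by (cases "is_comp xs"; cases "xs = []") (auto simp: is_functional_def zeta_odd_square_def)
qed

lemma odd_factor_zeta:
  assumes two: "(2::'k::field) \<noteq> 0"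
  shows "odd_factor zeta = (zeta_odd :: nat list \<Rightarrow> 'k)"
proof -
  have unit: "bar zeta [] = (1::'k)"
    by (simp add: zeta_def)
  have "conv (conv_inv (bar zeta)) zeta =
      conv (conv (conv_inv (bar zeta)) (bar zeta)) (zeta_odd_square :: nat list \<Rightarrow> 'k)"
    by (simp only: conv_assoc conv_bar_zeta_zeta_odd_square)
  then have "conv (conv_inv (bar zeta)) zeta = (zeta_odd_square :: nat list \<Rightarrow> 'k)"
    by (simp add: conv_inv_left[of "bar zeta", OF unit])
  then have "conv (odd_factor zeta) (odd_factor zeta) = conv zeta_odd (zeta_odd :: nat list \<Rightarrow> 'k)"
    using two by (simp add: odd_factor_def conv_sqrt_square conv_zeta_odd_zeta_odd zeta_odd_square_def)
  then show ?thesis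
    by (rule conv_square_inj[OF _ _ two, rotated 2]) (simp_all add: odd_factor_def)
qed

lemma even_factor_zeta_Cons:
  assumes "(2::'k::field) \<noteq> 0" and "0 < a"
  shows "even_factor zeta (a # xs) = zeta_odd (a # xs) + (-1) ^ a * (zeta_odd xs :: 'k)"
  using assms by (simp add: even_factor_def odd_factor_zeta conv_bar_zeta_Cons)

section \<open>Compositions and refinements\<close>

definition compositions :: "nat \<Rightarrow> nat list set" where
  "compositions n = {\<gamma>. is_comp_of \<gamma> n}"

lemma length_le_sum_list_comp: "is_comp \<gamma> \<Longrightarrow> length \<gamma> \<le> sum_list \<gamma>"
  by (induction \<gamma>) (auto simp: Suc_le_eq)

lemma finite_compositions: "finite (compositions n)"
proof (rule finite_subset)
  show "compositions n \<subseteq> {xs. set xs \<subseteq> {..n} \<and> length xs \<le> n}"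
    by (auto simp: compositions_def is_comp_of_def length_le_sum_list_comp member_le_sum_list)
  show "finite {xs. set xs \<subseteq> {..n} \<and> length xs \<le> n}"
    by (rule finite_lists_length_le) simp
qed

lemma compositions_0 [simp]: "compositions 0 = {[]}"
proof -
  have "\<gamma> = []" if "\<gamma> \<in> compositions 0" for \<gamma>
  proof -
    from that have "is_comp \<gamma>" and sum: "sum_list \<gamma> = 0"
      by (simp_all add: compositions_def is_comp_of_def del: sum_list_eq_0_iff)
    then show ?thesis
      using length_le_sum_list_comp[of \<gamma>] by (simp only: sum le_zero_eq length_0_conv)
  qed
  then show ?thesis
    by (auto simp: compositions_def is_comp_of_def)
qed

lemma Nil_notin_compositions: "0 < n \<Longrightarrow> \<gamma> \<in> compositions n \<Longrightarrow> \<gamma> \<noteq> []"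
  by (auto simp: compositions_def is_comp_of_def)

lemma Cons_in_compositions_iff: "c # \<gamma> \<in> compositions n \<longleftrightarrow> 0 < c \<and> c \<le> n \<and> \<gamma> \<in> compositions (n - c)"
  by (auto simp: compositions_def is_comp_of_def)

lemma compositions_1: "compositions (Suc 0) = {[Suc 0]}"
proof -
  have "\<gamma> = [Suc 0]" if "\<gamma> \<in> compositions (Suc 0)" for \<gamma>
    using that Nil_notin_compositions[of "Suc 0" \<gamma>] by (cases \<gamma>) (auto simp: Cons_in_compositions_iff)
  then show ?thesis
    by (auto simp: Cons_in_compositions_iff)
qed

fun inc_hd :: "nat list \<Rightarrow> nat list" where
  "inc_hd [] = []"
| "inc_hd (c # r) = Suc c # r"

lemma compositions_Suc:
  assumes "0 < n"
  shows "compositions (Suc n) = Cons 1 ` compositions n \<union> inc_hd ` compositions n"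
proof (intro equalityI subsetI)
  fix \<gamma> assume \<gamma>: "\<gamma> \<in> compositions (Suc n)"
  then obtain c r where "\<gamma> = c # r"
    using Nil_notin_compositions[OF zero_less_Suc] by (cases \<gamma>) auto
  with \<gamma> show "\<gamma> \<in> Cons 1 ` compositions n \<union> inc_hd ` compositions n"
    by (cases "c = 1") (auto simp: Cons_in_compositions_iff image_iff intro!: bexI[of _ "(c - 1) # r"])
next
  fix \<gamma> assume "\<gamma> \<in> Cons 1 ` compositions n \<union> inc_hd ` compositions n"
  then consider "\<gamma> \<in> Cons 1 ` compositions n" | \<delta> where "\<delta> \<in> compositions n" "\<gamma> = inc_hd \<delta>"
    by blast
  then show "\<gamma> \<in> compositions (Suc n)"
  proof cases
    case 2
    then show ?thesis
      using Nil_notin_compositions[OF assms] by (cases \<delta>) (auto simp: Cons_in_compositions_iff)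
  qed (auto simp: Cons_in_compositions_iff)
qed

lemma sum_compositions_Suc:
  assumes "0 < n"
  shows "(\<Sum>\<gamma>\<in>compositions (Suc n). f \<gamma>) =
    (\<Sum>\<gamma>\<in>compositions n. f (1 # \<gamma>)) + (\<Sum>\<gamma>\<in>compositions n. f (inc_hd \<gamma>))"
proof -
  have ne: "\<gamma> \<noteq> []" if "\<gamma> \<in> compositions n" for \<gamma>
    using Nil_notin_compositions[OF assms that] .
  have "inj_on inc_hd (compositions n)"
  proof (rule inj_onI)
    fix x y assume "x \<in> compositions n" "y \<in> compositions n" "inc_hd x = inc_hd y"
    with ne show "x = y"
      by (cases x; cases y) auto
  qed
  moreover have "Cons 1 ` compositions n \<inter> inc_hd ` compositions n = {}"
    using ne by (fastforce simp: neq_Nil_conv Cons_in_compositions_iff)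
  ultimately show ?thesis
    by (simp add: compositions_Suc[OF assms] sum.union_disjoint finite_compositions sum.reindex)
qed

lemma sum_compositions_hd_tl:
  "0 < n \<Longrightarrow> (\<Sum>\<gamma>\<in>compositions n. f \<gamma>) = (\<Sum>\<gamma>\<in>compositions n. f (hd \<gamma> # tl \<gamma>))"
  by (intro sum.cong refl) (simp add: Nil_notin_compositions)

lemma hd_tl_inc_hd: "\<gamma> \<noteq> [] \<Longrightarrow> hd (inc_hd \<gamma>) = Suc (hd \<gamma>) \<and> tl (inc_hd \<gamma>) = tl \<gamma>"
  by (cases \<gamma>) simp_all

lemma sum_compositions_rev: "(\<Sum>\<gamma>\<in>compositions n. f \<gamma>) = (\<Sum>\<gamma>\<in>compositions n. f (rev \<gamma>))"
  by (rule sum.reindex_bij_witness[where i = rev and j = rev])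
    (auto simp: compositions_def is_comp_of_def is_comp_def)

definition refinement_blocks :: "nat list \<Rightarrow> nat list list set" where
  "refinement_blocks \<alpha> = {\<beta>s. length \<beta>s = length \<alpha> \<and> (\<forall>i<length \<alpha>. is_comp_of (\<beta>s ! i) (\<alpha> ! i))}"

lemma refinement_blocks_Nil [simp]: "refinement_blocks [] = {[]}"
  by (auto simp: refinement_blocks_def)

lemma refinement_blocks_Cons:
  "refinement_blocks (a # \<alpha>) = (\<lambda>(\<gamma>, \<beta>s). \<gamma> # \<beta>s) ` (compositions a \<times> refinement_blocks \<alpha>)"
proof (intro equalityI subsetI)
  fix \<beta>s assume "\<beta>s \<in> refinement_blocks (a # \<alpha>)"
  then show "\<beta>s \<in> (\<lambda>(\<gamma>, \<beta>s). \<gamma> # \<beta>s) ` (compositions a \<times> refinement_blocks \<alpha>)"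
    by (cases \<beta>s) (force simp: refinement_blocks_def compositions_def)+
qed (auto simp: refinement_blocks_def compositions_def nth_Cons split: nat.split)

lemma sum_refinement_blocks_Cons:
  "(\<Sum>\<beta>s\<in>refinement_blocks (a # \<alpha>). f \<beta>s) =
    (\<Sum>\<gamma>\<in>compositions a. \<Sum>\<beta>s\<in>refinement_blocks \<alpha>. f (\<gamma> # \<beta>s))"
proof -
  have "inj_on (\<lambda>(\<gamma>, \<beta>s). \<gamma> # \<beta>s) (compositions a \<times> refinement_blocks \<alpha>)"
    by (auto simp: inj_on_def)
  then show ?thesis
    by (simp add: refinement_blocks_Cons sum.reindex sum.cartesian_product split_def)
qed

lemma comp_of_append_cancel:
  assumes "is_comp_of \<gamma> a" "is_comp_of \<gamma>' a" "\<gamma> @ u = \<gamma>' @ u'"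
  shows "\<gamma> = \<gamma>' \<and> u = u'"
  using assms
proof (induction \<gamma> arbitrary: \<gamma>' a)
  case Nil
  then show ?case
    by (cases \<gamma>') (auto simp: is_comp_of_def)
next
  case (Cons c g)
  then obtain g' where \<gamma>': "\<gamma>' = c # g'" and eq: "g @ u = g' @ u'"
    by (cases \<gamma>') (auto simp: is_comp_of_def)
  have "is_comp_of g (a - c)" "is_comp_of g' (a - c)"
    using Cons.prems \<gamma>' by (auto simp: is_comp_of_def)
  with Cons.IH eq \<gamma>' show ?case
    by blast
qed

lemma inj_on_concat_refinement_blocks: "inj_on concat (refinement_blocks \<alpha>)"
proof (induction \<alpha>)
  case (Cons a \<alpha>)
  show ?case
  proof (rule inj_onI)
    fix x y assume "x \<in> refinement_blocks (a # \<alpha>)" "y \<in> refinement_blocks (a # \<alpha>)"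
      and eq: "concat x = concat y"
    then obtain \<gamma> r \<gamma>' r' where x: "x = \<gamma> # r" "\<gamma> \<in> compositions a" "r \<in> refinement_blocks \<alpha>"
      and y: "y = \<gamma>' # r'" "\<gamma>' \<in> compositions a" "r' \<in> refinement_blocks \<alpha>"
      unfolding refinement_blocks_Cons by auto
    have "\<gamma> = \<gamma>' \<and> concat r = concat r'"
      using x y eq by (intro comp_of_append_cancel[of _ a]) (auto simp: compositions_def)
    with x y Cons.IH show "x = y"
      by (auto dest: inj_onD)
  qed
qed simp

lemma onF_eq_sum_refinement_blocks: "onF \<phi> \<alpha> = (\<Sum>\<beta>s\<in>refinement_blocks \<alpha>. \<phi> (concat \<beta>s))"
proof -
  have "refinements \<alpha> = concat ` refinement_blocks \<alpha>"
    by (auto simp: refinements_def refinement_blocks_def)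
  then show ?thesis
    by (simp add: onF_def sum.reindex[OF inj_on_concat_refinement_blocks])
qed

lemma concat_refinement_blocks:
  assumes "\<beta>s \<in> refinement_blocks \<alpha>" "is_comp \<alpha>"
  shows "is_comp (concat \<beta>s) \<and> (concat \<beta>s = [] \<longleftrightarrow> \<alpha> = [])"
  using assms
proof (induction \<alpha> arbitrary: \<beta>s)
  case (Cons a \<alpha>)
  then obtain \<gamma> r where "\<beta>s = \<gamma> # r" "\<gamma> \<in> compositions a" "r \<in> refinement_blocks \<alpha>"
    unfolding refinement_blocks_Cons by auto
  with Cons show ?case
    using Nil_notin_compositions[of a \<gamma>] by (auto simp: compositions_def is_comp_of_def)
qed simp

section \<open>Generating polynomials\<close>

text \<open>The values of \<open>zeta_odd\<close> are read off from signed monomials \<open>\<plusminus>x\<^sup>j\<close> by the linear map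
  \<open>x\<^sup>j \<mapsto> central_ratio (j div 2)\<close>; on monomials, refinement becomes polynomial multiplication.\<close>

definition central_functional :: "'k::field poly \<Rightarrow> 'k" where
  "central_functional P = (\<Sum>i\<le>degree P. coeff P i * central_ratio (i div 2))"

lemma central_functional_eq:
  assumes "degree P \<le> N"
  shows "central_functional P = (\<Sum>i\<le>N. coeff P i * central_ratio (i div 2))"
  unfolding central_functional_def using assms
  by (intro sum.mono_neutral_left) (auto simp: coeff_eq_0)

lemma central_functional_add: "central_functional (P + Q) = central_functional P + central_functional Q"
proof -
  let ?N = "max (degree P) (degree Q)"
  have "degree (P + Q) \<le> ?N"
    by (rule degree_add_le) auto
  then show ?thesis
    by (simp add: central_functional_eq[of _ ?N] algebra_simps sum.distrib)
qed

lemma central_functional_smult: "central_functional (smult c P) = c * central_functional P"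
  using central_functional_eq[OF degree_smult_le, of c P]
  by (simp add: central_functional_def sum_distrib_left mult.assoc)

lemma central_functional_diff: "central_functional (P - Q) = central_functional P - central_functional Q"
  using central_functional_add[of P "- Q"] central_functional_smult[of "-1" Q] by simp

lemma central_functional_0 [simp]: "central_functional 0 = 0"
  by (simp add: central_functional_def)

lemma central_functional_sum: "central_functional (\<Sum>x\<in>A. f x) = (\<Sum>x\<in>A. central_functional (f x))"
  by (induction A rule: infinite_finite_induct)
    (simp_all add: central_functional_add)

lemma central_functional_monom: "central_functional (monom c j) = c * central_ratio (j div 2)"
proof -
  have "central_functional (monom c j) = (\<Sum>i\<le>j. if i = j then c * central_ratio (j div 2) else 0)"
    by (subst central_functional_eq[OF degree_monom_le]) (intro sum.cong refl, simp add: coeff_monom)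
  then show ?thesis
    by simp
qed

definition parity_monom :: "nat list \<Rightarrow> 'k::field poly" where
  "parity_monom \<beta> = smult ((-1) ^ even_parts \<beta>) (monom 1 (odd_parts \<beta>))"

lemma parity_monom_Nil [simp]: "parity_monom [] = 1"
  by (simp add: parity_monom_def monom_0 one_pCons)

lemma parity_monom_append: "parity_monom (xs @ ys) = parity_monom xs * parity_monom ys"
  by (simp add: parity_monom_def mult_monom power_add mult_ac)

lemma parity_monom_Cons:
  "parity_monom (c # ys) = monom 1 1 * (if odd c then parity_monom ys else 0)
    - (if even c then parity_monom ys else 0)"
  by (simp add: parity_monom_def mult_monom smult_minus_left)

lemma parity_monom_rev: "parity_monom (rev xs) = parity_monom xs"
  by (simp add: parity_monom_def even_parts_def odd_parts_def flip: rev_filter)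

definition zeta_odd_poly :: "nat list \<Rightarrow> 'k::field poly" where
  "zeta_odd_poly \<beta> = (if \<beta> = [] \<or> odd (last \<beta>) then parity_monom \<beta> else 0)"

lemma zeta_odd_eq_central_functional:
  "is_comp \<beta> \<Longrightarrow> zeta_odd \<beta> = central_functional (zeta_odd_poly \<beta>)"
  by (simp add: zeta_odd_def zeta_odd_poly_def parity_monom_def central_functional_smult
      central_functional_monom)

lemma zeta_odd_poly_append:
  "ys \<noteq> [] \<Longrightarrow> zeta_odd_poly (xs @ ys) = parity_monom xs * zeta_odd_poly ys"
  by (simp add: zeta_odd_poly_def parity_monom_append)

lemma sum_compositions_by_head_parity:
  "(\<Sum>\<gamma>\<in>compositions (Suc n). if odd (hd \<gamma>) then parity_monom (tl \<gamma>) else 0) = monom (1::'k::field) n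
   \<and> (\<Sum>\<gamma>\<in>compositions (Suc n). if even (hd \<gamma>) then parity_monom (tl \<gamma>) else 0) =
      (if n = 0 then 0 else monom (1::'k) (n - 1))"
proof (induction n)
  case 0
  show ?case
    by (simp add: compositions_1)
next
  case (Suc n)
  let ?S = "\<lambda>P. \<Sum>\<gamma>\<in>compositions (Suc n). if P (hd \<gamma>) then parity_monom (tl \<gamma>) else (0::'k poly)"
  have ne: "\<gamma> \<noteq> []" if "\<gamma> \<in> compositions (Suc n)" for \<gamma>
    using Nil_notin_compositions that by blast
  have inc: "(\<Sum>\<gamma>\<in>compositions (Suc n). if P (hd (inc_hd \<gamma>)) then parity_monom (tl (inc_hd \<gamma>)) else 0) =
      ?S (\<lambda>c. P (Suc c))" for P
    by (intro sum.cong refl) (simp add: hd_tl_inc_hd ne)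
  have "(\<Sum>\<gamma>\<in>compositions (Suc n). parity_monom \<gamma>) = monom 1 1 * ?S odd - ?S even"
    by (subst sum_compositions_hd_tl) (simp_all add: parity_monom_Cons sum_distrib_left sum_subtractf)
  then have "(\<Sum>\<gamma>\<in>compositions (Suc (Suc n)). if odd (hd \<gamma>) then parity_monom (tl \<gamma>) else 0) =
      monom 1 1 * ?S odd - ?S even + ?S even"
    "(\<Sum>\<gamma>\<in>compositions (Suc (Suc n)). if even (hd \<gamma>) then parity_monom (tl \<gamma>) else 0) = ?S odd"
    unfolding sum_compositions_Suc[OF zero_less_Suc] inc[of odd] inc[of even] by simp_all
  then show ?case
    using Suc.IH by (simp add: mult_monom)
qed

lemma sum_parity_monom_compositions:
  assumes "0 < a"
  shows "(\<Sum>\<gamma>\<in>compositions a. parity_monom \<gamma>) =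
    monom (1::'k::field) (a - 2 * of_bool (1 < a)) * (monom 1 2 - 1) ^ of_bool (1 < a)"
proof -
  obtain n where a: "a = Suc n"
    using assms by (cases a) auto
  have "(\<Sum>\<gamma>\<in>compositions a. parity_monom \<gamma>) =
      monom 1 1 * (\<Sum>\<gamma>\<in>compositions a. if odd (hd \<gamma>) then parity_monom (tl \<gamma>) else 0)
      - (\<Sum>\<gamma>\<in>compositions a. if even (hd \<gamma>) then parity_monom (tl \<gamma>) else (0::'k poly))"
    by (subst sum_compositions_hd_tl[OF assms]) (simp add: parity_monom_Cons sum_distrib_left sum_subtractf)
  also have "\<dots> = monom 1 a - (if n = 0 then 0 else monom 1 (n - 1))"
    using sum_compositions_by_head_parity[of n, where 'k = 'k] by (simp add: a mult_monom)
  also have "\<dots> = monom 1 (a - 2 * of_bool (1 < a)) * (monom 1 2 - 1) ^ of_bool (1 < a)"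
    by (cases n) (simp_all add: a mult_monom right_diff_distrib)
  finally show ?thesis .
qed

lemma zeta_odd_poly_rev_Cons:
  "zeta_odd_poly (rev (c # r)) = monom 1 1 * (if odd c then parity_monom r else (0::'k::field poly))"
  by (simp add: zeta_odd_poly_def parity_monom_append parity_monom_rev parity_monom_Cons mult.commute)

lemma sum_zeta_odd_poly_compositions:
  assumes "0 < a"
  shows "(\<Sum>\<gamma>\<in>compositions a. zeta_odd_poly \<gamma>) = monom (1::'k::field) a"
proof -
  obtain n where a: "a = Suc n"
    using assms by (cases a) auto
  have "(\<Sum>\<gamma>\<in>compositions a. zeta_odd_poly \<gamma>) = (\<Sum>\<gamma>\<in>compositions a. zeta_odd_poly (rev \<gamma>))"
    by (rule sum_compositions_rev)
  also have "\<dots> = monom 1 1 * (\<Sum>\<gamma>\<in>compositions a. if odd (hd \<gamma>) then parity_monom (tl \<gamma>) else 0)"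
    by (subst sum_compositions_hd_tl[OF assms]) (simp only: zeta_odd_poly_rev_Cons sum_distrib_left)
  also have "\<dots> = monom 1 1 * monom 1 n"
    by (simp only: a conjunct1[OF sum_compositions_by_head_parity])
  finally show ?thesis
    by (simp add: a mult_monom)
qed

lemma even_factor_poly_Cons:
  "parity_monom (c # r) + smult ((-1) ^ c) (parity_monom r) =
    (monom 1 1 - 1) * (if odd c then parity_monom r else (0::'k::field poly))"
  by (cases "even c") (simp_all add: parity_monom_Cons algebra_simps)

lemma sum_even_factor_poly_compositions:
  assumes "0 < a"
  shows "(\<Sum>\<gamma>\<in>compositions a. parity_monom \<gamma> + smult ((-1) ^ hd \<gamma>) (parity_monom (tl \<gamma>))) =
    (monom (1::'k::field) 1 - 1) * monom 1 (a - 1)"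
proof -
  obtain n where a: "a = Suc n"
    using assms by (cases a) auto
  have "(\<Sum>\<gamma>\<in>compositions a. parity_monom \<gamma> + smult ((-1) ^ hd \<gamma>) (parity_monom (tl \<gamma>))) =
      (monom 1 1 - 1) * (\<Sum>\<gamma>\<in>compositions a. if odd (hd \<gamma>) then parity_monom (tl \<gamma>) else (0::'k poly))"
    by (subst sum_compositions_hd_tl[OF assms]) (simp only: list.sel even_factor_poly_Cons sum_distrib_left)
  then show ?thesis
    using sum_compositions_by_head_parity[of n, where 'k = 'k] by (simp add: a)
qed

section \<open>Values on the fundamental basis\<close>

lemma p_minus_Nil [simp]: "p_minus [] = 0"
  and p_minus_single [simp]: "p_minus [a] = 0"
  and p_plus_Nil [simp]: "p_plus [] = 0"
  and p_plus_single [simp]: "p_plus [a] = 0"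
  by (simp_all add: p_minus_def p_plus_def)

lemma p_minus_Cons:
  assumes "\<alpha> \<noteq> []"
  shows "p_minus (a # \<alpha>) = of_bool (1 < a) + p_minus \<alpha>"
proof -
  let ?I = "{i. i + 1 < length \<alpha> \<and> 1 < \<alpha> ! i}"
  have "{i. i + 1 < length (a # \<alpha>) \<and> 1 < (a # \<alpha>) ! i} = (if 1 < a then {0} else {}) \<union> Suc ` ?I"
  proof (rule set_eqI)
    fix i show "i \<in> {i. i + 1 < length (a # \<alpha>) \<and> 1 < (a # \<alpha>) ! i} \<longleftrightarrow>
        i \<in> (if 1 < a then {0} else {}) \<union> Suc ` ?I"
      using assms by (cases i) auto
  qed
  moreover have "finite ?I"
    by (rule finite_subset[of _ "{..<length \<alpha>}"]) auto
  moreover have "0 \<notin> Suc ` ?I"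
    by auto
  ultimately show ?thesis
    by (simp add: p_minus_def card_image)
qed

lemma p_plus_Cons:
  assumes "\<alpha> \<noteq> []"
  shows "p_plus (a # \<alpha>) = Suc (p_minus \<alpha>)"
proof -
  have "{i. 0 < i \<and> i + 1 < length (a # \<alpha>) \<and> 1 < (a # \<alpha>) ! i} = Suc ` {i. i + 1 < length \<alpha> \<and> 1 < \<alpha> ! i}"
  proof (rule set_eqI)
    fix i show "i \<in> {i. 0 < i \<and> i + 1 < length (a # \<alpha>) \<and> 1 < (a # \<alpha>) ! i} \<longleftrightarrow>
        i \<in> Suc ` {i. i + 1 < length \<alpha> \<and> 1 < \<alpha> ! i}"
      by (cases i) auto
  qed
  then show ?thesis
    using assms by (simp add: p_plus_def p_minus_def card_image)
qed

lemma double_p_minus_less: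
  "is_comp \<alpha> \<Longrightarrow> \<alpha> \<noteq> [] \<Longrightarrow> 2 * p_minus \<alpha> < sum_list \<alpha>"
proof (induction \<alpha>)
  case (Cons a \<alpha>)
  then show ?case
    by (cases "\<alpha> = []") (auto simp: p_minus_Cons)
qed simp

definition superC_ratio :: "nat \<Rightarrow> nat \<Rightarrow> 'k::field" where
  "superC_ratio p r = (-1) ^ p * of_nat (superC p r) / 2 ^ (2 * (p + r))"

lemma superC_ratio_Suc:
  assumes two: "(2::'k::field) \<noteq> 0"
  shows "superC_ratio p (Suc r) - superC_ratio p r = (superC_ratio (Suc p) r :: 'k)"
proof -
  have rec: "(of_nat (superC (Suc p) r) :: 'k) = 4 * of_nat (superC p r) - of_nat (superC p (Suc r))"
    using arg_cong[OF superC_Suc[of p r], of "of_nat :: nat \<Rightarrow> 'k"] by (simp add: algebra_simps)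
  have powers: "(2::'k) ^ (2 * (p + Suc r)) = 4 * 2 ^ (2 * (p + r))"
    "(2::'k) ^ (2 * (Suc p + r)) = 4 * 2 ^ (2 * (p + r))"
    by (simp_all add: power_add power_mult)
  have "(4::'k) \<noteq> 0"
    using two mult_eq_0_iff[of "2::'k" 2] by simp
  then show ?thesis
    unfolding superC_ratio_def powers rec using two by (simp add: field_simps)
qed

lemma superC_ratio_diff:
  assumes "p \<le> m"
  shows "superC_ratio p (m - p) = (-1) ^ p / 2 ^ (2 * m) * of_nat (superC p (m - p))"
  using assms by (simp add: superC_ratio_def)

lemma central_functional_monom_mult_power:
  assumes two: "(2::'k::field) \<noteq> 0"
  shows "central_functional (monom (1::'k) N * (monom 1 2 - 1) ^ p) = superC_ratio p (N div 2)"
proof (induction p arbitrary: N)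
  case 0
  show ?case
    by (simp add: central_functional_monom central_ratio_def superC_ratio_def superC_0)
next
  case (Suc p)
  have "monom (1::'k) N * (monom 1 2 - 1) ^ Suc p =
      monom 1 (N + 2) * (monom 1 2 - 1) ^ p - monom 1 N * (monom 1 2 - 1) ^ p"
    by (simp add: algebra_simps mult_monom)
  then show ?case
    by (simp add: central_functional_diff Suc.IH superC_ratio_Suc[OF two])
qed

lemma central_functional_x_minus_1_mult:
  assumes two: "(2::'k::field) \<noteq> 0"
  shows "central_functional ((monom 1 1 - 1) * monom (1::'k) M * (monom 1 2 - 1) ^ p) =
    (if odd M then superC_ratio (Suc p) (M div 2) else 0)"
proof -
  have "(monom 1 1 - 1) * monom (1::'k) M * (monom 1 2 - 1) ^ p =
      monom 1 (Suc M) * (monom 1 2 - 1) ^ p - monom 1 M * (monom 1 2 - 1) ^ p"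
    by (simp add: algebra_simps mult_monom)
  then show ?thesis
    by (simp add: central_functional_diff central_functional_monom_mult_power[OF two]
        superC_ratio_Suc[OF two] odd_Suc_div_two even_Suc_div_two)
qed

lemma sum_refinement_blocks_zeta_odd_poly:
  "is_comp \<alpha> \<Longrightarrow> (\<Sum>\<beta>s\<in>refinement_blocks \<alpha>. zeta_odd_poly (concat \<beta>s)) =
    monom (1::'k::field) (sum_list \<alpha> - 2 * p_minus \<alpha>) * (monom 1 2 - 1) ^ p_minus \<alpha>"
proof (induction \<alpha>)
  case Nil
  then show ?case
    by (simp add: zeta_odd_poly_def monom_0 one_pCons)
next
  case (Cons a \<alpha>)
  then have a: "0 < a" and comp: "is_comp \<alpha>"
    by auto
  show ?case
  proof (cases "\<alpha> = []")
    case True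
    then show ?thesis
      by (simp add: sum_refinement_blocks_Cons sum_zeta_odd_poly_compositions[OF a])
  next
    case False
    let ?q = "p_minus \<alpha>" and ?N = "sum_list \<alpha> - 2 * p_minus \<alpha>" and ?k = "of_bool (1 < a) :: nat"
    have "(\<Sum>\<beta>s\<in>refinement_blocks (a # \<alpha>). zeta_odd_poly (concat \<beta>s)) =
        (\<Sum>\<gamma>\<in>compositions a. \<Sum>\<beta>s\<in>refinement_blocks \<alpha>. parity_monom \<gamma> * zeta_odd_poly (concat \<beta>s))"
      unfolding sum_refinement_blocks_Cons
      using concat_refinement_blocks[OF _ comp] False
      by (intro sum.cong refl) (simp add: zeta_odd_poly_append)
    also have "\<dots> = (\<Sum>\<gamma>\<in>compositions a. parity_monom \<gamma>) * (monom (1::'k) ?N * (monom 1 2 - 1) ^ ?q)"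
      by (simp only: Cons.IH[OF comp, symmetric] sum_product)
    also have "\<dots> = monom 1 (a - 2 * ?k + ?N) * (monom 1 2 - 1) ^ (?k + ?q)"
    proof -
      have "monom (1::'k) (a - 2 * ?k + ?N) = monom 1 (a - 2 * ?k) * monom 1 ?N"
        by (simp add: mult_monom)
      then show ?thesis
        by (simp only: sum_parity_monom_compositions[OF a] power_add) (simp add: mult_ac)
    qed
    also have "a - 2 * ?k + ?N = sum_list (a # \<alpha>) - 2 * p_minus (a # \<alpha>)"
      using a double_p_minus_less[OF comp False] by (simp add: p_minus_Cons[OF False])
    also have "?k + ?q = p_minus (a # \<alpha>)"
      by (simp add: p_minus_Cons[OF False])
    finally show ?thesis .
  qed
qed

lemma onF_odd_factor_zeta:
  assumes two: "(2::'k::field) \<noteq> 0" and comp: "is_comp_of \<alpha> n"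
  shows "onF (odd_factor zeta :: nat list \<Rightarrow> 'k) \<alpha> =
    (-1) ^ p_minus \<alpha> / 2 ^ (2 * (n div 2)) * of_nat (superC (p_minus \<alpha>) (n div 2 - p_minus \<alpha>))"
proof -
  let ?p = "p_minus \<alpha>"
  have c: "is_comp \<alpha>" and n: "sum_list \<alpha> = n"
    using comp by (auto simp: is_comp_of_def)
  have "2 * ?p \<le> n"
    using double_p_minus_less[OF c] n by (cases "\<alpha> = []") auto
  then have half: "(n - 2 * ?p) div 2 = n div 2 - ?p" and "?p \<le> n div 2"
    by linarith+
  have "onF (odd_factor zeta :: nat list \<Rightarrow> 'k) \<alpha> =
      (\<Sum>\<beta>s\<in>refinement_blocks \<alpha>. central_functional (zeta_odd_poly (concat \<beta>s)))"
    unfolding onF_eq_sum_refinement_blocks odd_factor_zeta[OF two]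
    using concat_refinement_blocks[OF _ c] by (intro sum.cong refl) (simp add: zeta_odd_eq_central_functional)
  also have "\<dots> = superC_ratio ?p (n div 2 - ?p)"
    by (simp add: central_functional_sum[symmetric] sum_refinement_blocks_zeta_odd_poly[OF c]
        central_functional_monom_mult_power[OF two] n half)
  finally show ?thesis
    using \<open>?p \<le> n div 2\<close> by (simp add: superC_ratio_diff)
qed

lemma sum_zeta_odd_compositions:
  assumes "0 < a"
  shows "(\<Sum>\<gamma>\<in>compositions a. zeta_odd \<gamma>) = (central_ratio (a div 2) :: 'k::field)"
proof -
  have "(\<Sum>\<gamma>\<in>compositions a. zeta_odd \<gamma>) =
      (\<Sum>\<gamma>\<in>compositions a. central_functional (zeta_odd_poly \<gamma>) :: 'k)"
    by (intro sum.cong refl) (simp add: compositions_def is_comp_of_def zeta_odd_eq_central_functional)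
  then show ?thesis
    by (simp add: central_functional_sum[symmetric] sum_zeta_odd_poly_compositions[OF assms]
        central_functional_monom)
qed

lemma sum_compositions_sign_zeta_odd_tl:
  "0 < a \<Longrightarrow> (\<Sum>\<gamma>\<in>compositions a. (-1) ^ hd \<gamma> * zeta_odd (tl \<gamma>)) =
    (if even a then 0 else - central_ratio (a div 2) :: 'k::field)"
proof (induction a rule: nat_induct_non_zero)
  case 1
  then show ?case
    by (simp add: compositions_1)
next
  case (Suc n)
  have "(\<Sum>\<gamma>\<in>compositions n. (-1) ^ hd (inc_hd \<gamma>) * zeta_odd (tl (inc_hd \<gamma>))) =
      - (\<Sum>\<gamma>\<in>compositions n. (-1) ^ hd \<gamma> * (zeta_odd (tl \<gamma>) :: 'k))"
    unfolding sum_negf[symmetric]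
    by (intro sum.cong refl) (simp add: hd_tl_inc_hd Nil_notin_compositions[OF Suc.hyps])
  with Suc.IH show ?case
    by (simp add: sum_compositions_Suc[OF Suc.hyps] sum_negf sum_zeta_odd_compositions[OF Suc.hyps]
        even_Suc_div_two)
qed

lemma onF_even_factor_zeta_single:
  assumes two: "(2::'k::field) \<noteq> 0" and a: "0 < a"
  shows "onF (even_factor zeta :: nat list \<Rightarrow> 'k) [a] = (if even a then central_ratio (a div 2) else 0)"
proof -
  have "onF (even_factor zeta :: nat list \<Rightarrow> 'k) [a] = (\<Sum>\<gamma>\<in>compositions a. even_factor zeta \<gamma>)"
    by (simp add: onF_eq_sum_refinement_blocks sum_refinement_blocks_Cons)
  also have "\<dots> = (\<Sum>\<gamma>\<in>compositions a. zeta_odd \<gamma> + (-1) ^ hd \<gamma> * zeta_odd (tl \<gamma>))"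
  proof (rule sum.cong)
    fix \<gamma> assume \<gamma>: "\<gamma> \<in> compositions a"
    then obtain c r where "\<gamma> = c # r" "0 < c"
      using Nil_notin_compositions[OF a \<gamma>] by (cases \<gamma>) (auto simp: Cons_in_compositions_iff)
    then show "even_factor zeta \<gamma> = zeta_odd \<gamma> + (-1) ^ hd \<gamma> * (zeta_odd (tl \<gamma>) :: 'k)"
      by (simp add: even_factor_zeta_Cons[OF two])
  qed simp
  also have "\<dots> = (if even a then central_ratio (a div 2) else 0)"
    by (simp add: sum.distrib sum_zeta_odd_compositions[OF a] sum_compositions_sign_zeta_odd_tl[OF a])
  finally show ?thesis .
qed

lemma even_factor_zeta_append:
  assumes two: "(2::'k::field) \<noteq> 0" and "is_comp \<gamma>" "\<gamma> \<noteq> []" "is_comp B" "B \<noteq> []"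
  shows "even_factor zeta (\<gamma> @ B) = central_functional
    ((parity_monom \<gamma> + smult ((-1) ^ hd \<gamma>) (parity_monom (tl \<gamma>))) * zeta_odd_poly B :: 'k poly)"
proof -
  have zeta_odd_append: "zeta_odd (\<delta> @ B) = central_functional (parity_monom \<delta> * zeta_odd_poly B :: 'k poly)"
    if "is_comp \<delta>" for \<delta>
    using that assms by (simp add: zeta_odd_eq_central_functional zeta_odd_poly_append)
  from assms obtain c r where \<gamma>: "\<gamma> = c # r" "0 < c" "is_comp r"
    by (cases \<gamma>) auto
  then have "even_factor zeta (\<gamma> @ B) =
      zeta_odd (\<gamma> @ B) + (-1) ^ hd \<gamma> * (zeta_odd (tl \<gamma> @ B) :: 'k)"
    by (simp add: even_factor_zeta_Cons[OF two])
  moreover have "is_comp (tl \<gamma>)"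
    using \<gamma> by simp
  ultimately show ?thesis
    by (simp add: zeta_odd_append \<open>is_comp \<gamma>\<close> central_functional_add central_functional_smult
        distrib_right)
qed

lemma onF_even_factor_zeta_Cons:
  assumes two: "(2::'k::field) \<noteq> 0" and a: "0 < a" and comp: "is_comp \<alpha>" "\<alpha> \<noteq> []"
  shows "onF (even_factor zeta :: nat list \<Rightarrow> 'k) (a # \<alpha>) = central_functional ((monom 1 1 - 1)
    * monom 1 (sum_list (a # \<alpha>) - 1 - 2 * p_minus \<alpha>) * (monom 1 2 - 1) ^ p_minus \<alpha>)"
proof -
  let ?q = "p_minus \<alpha>" and ?N = "sum_list \<alpha> - 2 * p_minus \<alpha>"
  have "onF (even_factor zeta :: nat list \<Rightarrow> 'k) (a # \<alpha>) =
      (\<Sum>\<gamma>\<in>compositions a. \<Sum>\<beta>s\<in>refinement_blocks \<alpha>. central_functional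
        ((parity_monom \<gamma> + smult ((-1) ^ hd \<gamma>) (parity_monom (tl \<gamma>))) * zeta_odd_poly (concat \<beta>s)))"
    unfolding onF_eq_sum_refinement_blocks sum_refinement_blocks_Cons concat.simps
    using concat_refinement_blocks[OF _ comp(1)] comp(2) Nil_notin_compositions[OF a]
    by (intro sum.cong refl even_factor_zeta_append[OF two]) (auto simp: compositions_def is_comp_of_def)
  also have "\<dots> = central_functional ((monom 1 1 - 1) * monom 1 (a - 1) * (monom 1 ?N * (monom 1 2 - 1) ^ ?q))"
    by (simp add: central_functional_sum[symmetric] sum_product[symmetric]
        sum_even_factor_poly_compositions[OF a] sum_refinement_blocks_zeta_odd_poly[OF comp(1)])
  also have "\<dots> = central_functional ((monom 1 1 - 1)
      * monom 1 (sum_list (a # \<alpha>) - 1 - 2 * ?q) * (monom 1 2 - 1) ^ ?q)"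
  proof -
    have "monom 1 (sum_list (a # \<alpha>) - 1 - 2 * ?q) = monom 1 (a - 1) * monom (1::'k) ?N"
      using a double_p_minus_less[OF comp] by (simp add: mult_monom)
    then show ?thesis
      by (simp only: mult.assoc)
  qed
  finally show ?thesis .
qed

lemma onF_even_factor_zeta:
  assumes two: "(2::'k::field) \<noteq> 0" and comp: "is_comp_of \<alpha> n"
  shows "onF (even_factor zeta :: nat list \<Rightarrow> 'k) \<alpha> =
    (if even n then (-1) ^ p_plus \<alpha> / 2 ^ n * of_nat (superC (p_plus \<alpha>) (n div 2 - p_plus \<alpha>)) else 0)"
proof (cases \<alpha>)
  case Nil
  then show ?thesis
    using comp by (simp add: onF_eq_sum_refinement_blocks is_comp_of_def even_factor_def
        odd_factor_def zeta_def superC_0)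
next
  case (Cons a \<alpha>')
  then have a: "0 < a" and c': "is_comp \<alpha>'" and n: "n = a + sum_list \<alpha>'"
    using comp by (auto simp: is_comp_of_def)
  show ?thesis
  proof (cases "\<alpha>' = []")
    case True
    then show ?thesis
      using n by (auto simp: Cons onF_even_factor_zeta_single[OF two a] central_ratio_def superC_0)
  next
    case False
    let ?q = "p_minus \<alpha>'"
    have "2 * ?q + 1 < n" and p_plus: "p_plus \<alpha> = Suc ?q"
      using a double_p_minus_less[OF c' False] by (simp_all add: n Cons p_plus_Cons[OF False])
    then have "odd (n - 1 - 2 * ?q) \<longleftrightarrow> even n"
      and "even n \<Longrightarrow> (n - 1 - 2 * ?q) div 2 = n div 2 - p_plus \<alpha>"
      and "p_plus \<alpha> \<le> n div 2" and "even n \<Longrightarrow> 2 * (n div 2) = n"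
      by (simp_all add: p_plus) presburger+
    moreover have "onF (even_factor zeta :: nat list \<Rightarrow> 'k) \<alpha> =
        (if odd (n - 1 - 2 * ?q) then superC_ratio (Suc ?q) ((n - 1 - 2 * ?q) div 2) else 0)"
    proof -
      have "sum_list (a # \<alpha>') = n"
        by (simp add: n)
      then show ?thesis
        by (simp only: Cons onF_even_factor_zeta_Cons[OF two a c' False]
            central_functional_x_minus_1_mult[OF two])
    qed
    ultimately show ?thesis
      by (cases "even n") (simp_all add: p_plus superC_ratio_diff)
  qed
qed

theorem theorem5p1:
  fixes \<alpha> :: "nat list" and n :: nat
  assumes char: "(2::'k::field) \<noteq> 0"
    and comp: "is_comp_of \<alpha> n"
  shows "onF (odd_part (zeta :: nat list \<Rightarrow> 'k)) \<alpha> =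
           (-1) ^ p_minus \<alpha> / 2 ^ (2 * (n div 2))
             * of_nat (superC (p_minus \<alpha>) (n div 2 - p_minus \<alpha>))
         \<and> onF (even_part (zeta :: nat list \<Rightarrow> 'k)) \<alpha> =
           (if even n then (-1) ^ p_plus \<alpha> / 2 ^ n
                 * of_nat (superC (p_plus \<alpha>) (n div 2 - p_plus \<alpha>))
            else 0)"
  using onF_odd_factor_zeta[OF char comp] onF_even_factor_zeta[OF char comp]
  by (simp add: even_odd_part_eq[OF is_char_zeta is_functional_zeta char])

end
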